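(* Let $\mathcal T$ be a mesh as in the context, $i\in\{1,\dots,d\}$, $n\in\{0,\dots,N_i\}$, and $x\in\mathrm{ATJ}_i(n)$. Then there are an anchor $A\in\mathcal A$ with $x\in\mathrm{supp}_\Omega B_A$ and a T-junction $T$ with $\mathrm{odir}(T)=i$ and associated cell $Q=\mathrm{ascell}(T)$ such that, with $j=\mathrm{pdir}(T)$: (1) $\overline T\cap\mathrm{conv}\bigl(P_{i,n}(A)\cup\{x\}\bigr)\ne\emptyset$; (2) $Q_j\cap\mathrm{conv}\bigl(A_j\cup\{x_j\}\bigr)\ne\emptyset$; (3) there exists $y\in A_j$ with $y\ne x_j$.
   Context: Fix $d\ge2$, integers $N_1,\dots,N_d\ge1$, $\mathbf p=(p_1,\dots,p_d)\in\mathbb N^d$, $q_k=\lfloor(p_k+1)/2\rfloor$, $\Omega=\prod_{k=1}^d(0,N_k)$, $\mathrm{AR}=\prod_k[q_k,N_k-q_k]$. A mesh $\mathcal T$ is a finite family of pairwise disjoint sets $E=E_1\times\cdots\times E_d$ (entities) with union $\overline\Omega$, each $E_k$ a singleton $\{n\}$, $n\in\{0,\dots,N_k\}$, or an open interval $(a,b)$ with integers $0\le a<b\le N_k$; cells are entities all of whose components are open intervals; the dimension of an entity is its number of interval components. Only meshes arising as follows are considered: start from a tensor-product mesh given by integer grids $0=g^k_0<\dots<g^k_{M_k}=N_k$ (entities: products of grid points and open grid intervals), each containing $0,\dots,q_k$ and $N_k-q_k,\dots,N_k$, and apply finitely many subdivision steps $\mathrm{subdiv}(\mathcal T,Q,j)$: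 for a cell $Q\subset\mathrm{AR}$ and direction $j$ with $m=\frac12(\inf Q_j+\sup Q_j)$ an integer, let $D=\overline Q$; for each $\ell\ne j$, if $\min D_\ell=q_\ell$ replace $D_\ell$ by $D_\ell\cup[0,q_\ell]$, and if $\max D_\ell=N_\ell-q_\ell$ replace $D_\ell$ by $D_\ell\cup[N_\ell-q_\ell,N_\ell]$; replace each entity $E\subset D$ with $E_j=Q_j$ by the three entities with $j$-th component $(\inf Q_j,m)$, $\{m\}$, $(m,\sup Q_j)$. $P_{j,n}(E)$ is $E$ with its $j$-th component replaced by $\{n\}$; $S_j(n)=\{z\in\overline\Omega:z_j=n\}$; $\mathrm{Sk}_j=\bigcup_{Q\text{ cell}}\{z\in\overline Q:z_j\in\{\inf Q_j,\sup Q_j\}\}$; $\mathrm{conv}$ is convex hull. T-junctions: an entity $T$ of dimension $d-2$, $T\not\subset\partial\Omega$, such that fewer than four entities $F$ of dimension $d-1$ satisfy $T\subset\partial F$; with singleton components $T_i=\{t_i\}$, $T_j=\{t_j\}$, the unique cell $Q=\mathrm{ascell}(T)$ with $T\subset\partial Q$, $t_i\in Q_i$, $t_j\in\{\inf Q_j,\sup Q_j\}$ defines $\mathrm{odir}(T)=i$, $\mathrm{pdir}(T)=j$. Anchors: $\kappa=\{\ell:p_\ell\text{ odd}\}$; $\mathcal A$ is the set of all $A=A_1\times\dots\times A_d\subset\mathrm{AR}$ such that for some cell $Q$, $A_\ell=\{n_\ell\}$ with $n_\ell\in\{\inf Q_\ell,\sup Q_\ell\}$ for $\ell\in\kappa$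 and $A_\ell=Q_\ell$ for $\ell\notin\kappa$. Global knot vector $\Xi^j_E$: increasing sequence of all integers $n$ with $P_{j,n}(E)\subseteq\mathrm{Sk}_j$. Local knot vector $v^j_A=(\ell_0,\dots,\ell_{p_j+1})$: consecutive entries of $\Xi^j_A$ with $\ell_{\lfloor(p_j+1)/2\rfloor}=\inf A_j$. $\mathrm{supp}_\Omega B_A=\prod_k[\ell^{(k)}_0,\ell^{(k)}_{p_k+1}]$ where $v^k_A=(\ell^{(k)}_0,\dots,\ell^{(k)}_{p_k+1})$. Abstract T-junction extension: $\mathrm{ATJ}_j(n)=S_j(n)\cap\bigcup_{A\in\mathcal A,\,n\in\Xi^j_A}\mathrm{supp}_\Omega B_A\cap\bigcup_{A\in\mathcal A,\,n\notin\Xi^j_A}\mathrm{supp}_\Omega B_A$. *)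

theory Defs
  imports "HOL-Analysis.Analysis"
begin

text \<open>Coordinate directions are the elements of a finite type 'd, so d = CARD('d);
points of the closed domain live in real^'d.  An entity is described by its
components: each component is a singleton {n} (Pt n) or an open interval (a,b) (Iv a b).\<close>

datatype comp = Pt int | Iv int int

fun cset :: "comp \<Rightarrow> real set" where
  "cset (Pt n) = {real_of_int n}"
| "cset (Iv a b) = {real_of_int a <..< real_of_int b}"

fun clo :: "comp \<Rightarrow> int" where
  "clo (Pt n) = n"
| "clo (Iv a b) = a"

fun chi :: "comp \<Rightarrow> int" where
  "chi (Pt n) = n"
| "chi (Iv a b) = b"

fun is_iv :: "comp \<Rightarrow> bool" where
  "is_iv (Pt n) = False"
| "is_iv (Iv a b) = True"

type_synonym 'd ent = "'d \<Rightarrow> comp"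

definition eset :: "'d::finite ent \<Rightarrow> (real^'d) set" where
  "eset E = {z. \<forall>k. z$k \<in> cset (E k)}"

definition is_cell :: "'d::finite ent \<Rightarrow> bool" where
  "is_cell E \<longleftrightarrow> (\<forall>k. is_iv (E k))"

definition edim :: "'d::finite ent \<Rightarrow> nat" where
  "edim E = card {k. is_iv (E k)}"

definition qq :: "('d \<Rightarrow> nat) \<Rightarrow> 'd \<Rightarrow> nat" where
  "qq p k = (p k + 1) div 2"

definition Omega :: "('d::finite \<Rightarrow> nat) \<Rightarrow> (real^'d) set" where
  "Omega N = {z. \<forall>k. 0 < z$k \<and> z$k < real (N k)}"

definition cOmega :: "('d::finite \<Rightarrow> nat) \<Rightarrow> (real^'d) set" where
  "cOmega N = {z. \<forall>k. 0 \<le> z$k \<and> z$k \<le> real (N k)}"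

definition AR :: "('d::finite \<Rightarrow> nat) \<Rightarrow> ('d \<Rightarrow> nat) \<Rightarrow> (real^'d) set" where
  "AR N p = {z. \<forall>k. real (qq p k) \<le> z$k \<and> z$k \<le> real (N k) - real (qq p k)}"

definition grids_ok :: "('d::finite \<Rightarrow> nat) \<Rightarrow> ('d \<Rightarrow> nat) \<Rightarrow> ('d \<Rightarrow> int set) \<Rightarrow> bool" where
  "grids_ok N p G \<longleftrightarrow> (\<forall>k. G k \<subseteq> {0..int (N k)} \<and> 0 \<in> G k \<and> int (N k) \<in> G k
      \<and> {0..int (qq p k)} \<subseteq> G k \<and> {int (N k) - int (qq p k)..int (N k)} \<subseteq> G k)"

definition tensor_mesh :: "('d::finite \<Rightarrow> int set) \<Rightarrow> 'd ent set" where
  "tensor_mesh G = {E. \<forall>k. (case E k of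
       Pt g \<Rightarrow> g \<in> G k
     | Iv a b \<Rightarrow> a \<in> G k \<and> b \<in> G k \<and> a < b \<and> (\<forall>g\<in>G k. \<not> (a < g \<and> g < b)))}"

text \<open>The set D of the subdivision step (closure of Q, extended to the boundary layers)\<close>
definition subdiv_region :: "('d::finite \<Rightarrow> nat) \<Rightarrow> ('d \<Rightarrow> nat) \<Rightarrow> 'd ent \<Rightarrow> 'd \<Rightarrow> (real^'d) set" where
  "subdiv_region N p Q j = {z. \<forall>l.
     (if l = j then real_of_int (clo (Q j)) \<le> z$l \<and> z$l \<le> real_of_int (chi (Q j))
      else (if clo (Q l) = int (qq p l) then 0 else real_of_int (clo (Q l))) \<le> z$l
         \<and> z$l \<le> (if chi (Q l) = int (N l) - int (qq p l) then real (N l) else real_of_int (chi (Q l))))}"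

definition subdiv :: "('d::finite \<Rightarrow> nat) \<Rightarrow> ('d \<Rightarrow> nat) \<Rightarrow> 'd ent set \<Rightarrow> 'd ent \<Rightarrow> 'd \<Rightarrow> 'd ent set" where
  "subdiv N p T Q j =
    (let D = subdiv_region N p Q j;
         a = clo (Q j); b = chi (Q j); m = (a + b) div 2;
         aff = {E \<in> T. eset E \<subseteq> D \<and> E j = Q j}
     in (T - aff) \<union> (\<Union>E\<in>aff. {E(j := Iv a m), E(j := Pt m), E(j := Iv m b)}))"

inductive mesh_gen :: "('d::finite \<Rightarrow> nat) \<Rightarrow> ('d \<Rightarrow> nat) \<Rightarrow> 'd ent set \<Rightarrow> bool"
  for N p where
  init: "grids_ok N p G \<Longrightarrow> mesh_gen N p (tensor_mesh G)"
| step: "mesh_gen N p T \<Longrightarrow> Q \<in> T \<Longrightarrow> is_cell Q \<Longrightarrow> eset Q \<subseteq> AR N p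
         \<Longrightarrow> even (clo (Q j) + chi (Q j)) \<Longrightarrow> mesh_gen N p (subdiv N p T Q j)"

definition tjunction :: "('d::finite \<Rightarrow> nat) \<Rightarrow> 'd ent set \<Rightarrow> 'd ent \<Rightarrow> bool" where
  "tjunction N M T \<longleftrightarrow> T \<in> M \<and> edim T = CARD('d) - 2
     \<and> \<not> eset T \<subseteq> frontier (Omega N)
     \<and> card {F \<in> M. edim F = CARD('d) - 1 \<and> eset T \<subseteq> frontier (eset F)} < 4"

text \<open>ascell_rel M T Q i j: Q = ascell(T), odir(T) = i, pdir(T) = j\<close>
definition ascell_rel :: "'d::finite ent set \<Rightarrow> 'd ent \<Rightarrow> 'd ent \<Rightarrow> 'd \<Rightarrow> 'd \<Rightarrow> bool" where
  "ascell_rel M T Q i j \<longleftrightarrow> i \<noteq> j \<and> Q \<in> M \<and> is_cell Q \<and> eset T \<subseteq> frontier (eset Q)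
     \<and> (\<exists>ti tj. T i = Pt ti \<and> T j = Pt tj \<and> real_of_int ti \<in> cset (Q i)
                \<and> tj \<in> {clo (Q j), chi (Q j)})"

definition anchors :: "('d::finite \<Rightarrow> nat) \<Rightarrow> ('d \<Rightarrow> nat) \<Rightarrow> 'd ent set \<Rightarrow> 'd ent set" where
  "anchors N p M = {A. eset A \<subseteq> AR N p \<and> (\<exists>Q\<in>M. is_cell Q \<and>
      (\<forall>l. if odd (p l) then (\<exists>n\<in>{clo (Q l), chi (Q l)}. A l = Pt n) else A l = Q l))}"

definition Sk :: "'d::finite ent set \<Rightarrow> 'd \<Rightarrow> (real^'d) set" where
  "Sk M j = (\<Union>Q\<in>{Q \<in> M. is_cell Q}.
      {z \<in> closure (eset Q). z$j \<in> {real_of_int (clo (Q j)), real_of_int (chi (Q j))}})"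

definition gknots :: "'d::finite ent set \<Rightarrow> 'd \<Rightarrow> 'd ent \<Rightarrow> int set" where
  "gknots M j E = {n. eset (E(j := Pt n)) \<subseteq> Sk M j}"

definition is_lkv :: "('d::finite \<Rightarrow> nat) \<Rightarrow> 'd ent set \<Rightarrow> 'd \<Rightarrow> 'd ent \<Rightarrow> int list \<Rightarrow> bool" where
  "is_lkv p M j A v \<longleftrightarrow> length v = p j + 2 \<and> v ! qq p j = clo (A j)
     \<and> (\<exists>r. v = take (p j + 2) (drop r (sorted_list_of_set (gknots M j A))))"

definition lkv :: "('d::finite \<Rightarrow> nat) \<Rightarrow> 'd ent set \<Rightarrow> 'd \<Rightarrow> 'd ent \<Rightarrow> int list" where
  "lkv p M j A = (THE v. is_lkv p M j A v)"

definition suppB :: "('d::finite \<Rightarrow> nat) \<Rightarrow> 'd ent set \<Rightarrow> 'd ent \<Rightarrow> (real^'d) set" where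
  "suppB p M A = {z. \<forall>k. real_of_int (hd (lkv p M k A)) \<le> z$k
                        \<and> z$k \<le> real_of_int (last (lkv p M k A))}"

definition Sj :: "('d::finite \<Rightarrow> nat) \<Rightarrow> 'd \<Rightarrow> int \<Rightarrow> (real^'d) set" where
  "Sj N j n = {z \<in> cOmega N. z$j = real_of_int n}"

definition ATJ :: "('d::finite \<Rightarrow> nat) \<Rightarrow> ('d \<Rightarrow> nat) \<Rightarrow> 'd ent set \<Rightarrow> 'd \<Rightarrow> int \<Rightarrow> (real^'d) set" where
  "ATJ N p M j n = Sj N j n
     \<inter> (\<Union>A\<in>{A \<in> anchors N p M. n \<in> gknots M j A}. suppB p M A)
     \<inter> (\<Union>A\<in>{A \<in> anchors N p M. n \<notin> gknots M j A}. suppB p M A)"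

end

theory Submission
  imports Defs
begin

section \<open>Components and entities\<close>

lemma cset_bounds: "x \<in> cset c \<Longrightarrow> real_of_int (clo c) \<le> x \<and> x \<le> real_of_int (chi c)"
  by (cases c) auto

lemma mem_cset_iff:
  "x \<in> cset c \<longleftrightarrow>
     (if is_iv c then real_of_int (clo c) < x \<and> x < real_of_int (chi c) else x = real_of_int (clo c))"
  by (cases c) auto

lemma not_is_iv_iff: "\<not> is_iv c \<longleftrightarrow> c = Pt (clo c)"
  by (cases c) auto

lemma mem_eset: "z \<in> eset E \<longleftrightarrow> (\<forall>k. z$k \<in> cset (E k))"
  unfolding eset_def by simp

lemma eset_upd_Pt_nth: "z \<in> eset (E(i := Pt n)) \<Longrightarrow> z$i = real_of_int n"
  unfolding mem_eset by (metis cset.simps(1) fun_upd_same singletonD)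

definition wf_comp :: "nat \<Rightarrow> comp \<Rightarrow> bool" where
  "wf_comp Nk c \<longleftrightarrow> 0 \<le> clo c \<and> chi c \<le> int Nk \<and> (is_iv c \<longrightarrow> clo c < chi c)"

text \<open>For well-formed components, \<open>meets_closure c c'\<close> says that \<open>c\<close> meets the closure of
  \<open>c'\<close>, and \<open>within_closure c c'\<close> that \<open>c\<close> lies in the closure of \<open>c'\<close>.\<close>

definition meets_closure :: "comp \<Rightarrow> comp \<Rightarrow> bool" where
  "meets_closure c c' =
     (case c of Pt m \<Rightarrow> clo c' \<le> m \<and> m \<le> chi c' | Iv a b \<Rightarrow> a < chi c' \<and> clo c' < b)"

definition within_closure :: "comp \<Rightarrow> comp \<Rightarrow> bool" where
  "within_closure c c' \<longleftrightarrow> clo c' \<le> clo c \<and> chi c \<le> chi c'"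

lemma meets_closureI:
  "x \<in> cset c \<Longrightarrow> real_of_int (clo c') \<le> x \<Longrightarrow> x \<le> real_of_int (chi c') \<Longrightarrow> meets_closure c c'"
  unfolding meets_closure_def by (cases c) auto

lemma within_closure_trans: "within_closure c1 c2 \<Longrightarrow> within_closure c2 c3 \<Longrightarrow> within_closure c1 c3"
  unfolding within_closure_def by auto

definition lo_corner :: "'d::finite ent \<Rightarrow> real^'d" where
  "lo_corner E = (\<chi> k. real_of_int (clo (E k)))"

definition hi_corner :: "'d::finite ent \<Rightarrow> real^'d" where
  "hi_corner E = (\<chi> k. real_of_int (chi (E k)))"

definition ebox :: "'d::finite ent \<Rightarrow> (real^'d) set" where
  "ebox E = cbox (lo_corner E) (hi_corner E)"

lemma mem_ebox: "z \<in> ebox E \<longleftrightarrow> (\<forall>k. real_of_int (clo (E k)) \<le> z$k \<and> z$k \<le> real_of_int (chi (E k)))"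
  unfolding ebox_def lo_corner_def hi_corner_def by (simp add: mem_box_cart)

lemma eset_subset_ebox: "eset E \<subseteq> ebox E"
  unfolding mem_ebox mem_eset subset_iff using cset_bounds by blast

lemma meets_closure_of_point: "z \<in> eset E \<Longrightarrow> z \<in> ebox E' \<Longrightarrow> meets_closure (E k) (E' k)"
  unfolding mem_eset mem_ebox by (meson meets_closureI)

lemma ebox_mono: "(\<And>k. within_closure (E k) (F k)) \<Longrightarrow> ebox E \<subseteq> ebox F"
  unfolding mem_ebox subset_iff within_closure_def by (meson of_int_le_iff order_trans)

lemma eset_cell_eq_box: "is_cell Q \<Longrightarrow> eset Q = box (lo_corner Q) (hi_corner Q)"
  unfolding is_cell_def set_eq_iff mem_eset mem_box_cart lo_corner_def hi_corner_def mem_cset_iff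
  by simp

lemma convex_eset: "convex (eset (E :: 'd::finite ent))"
proof -
  have "eset E = (\<Inter>k. (\<lambda>z. z$k) -` cset (E k))"
    unfolding eset_def by auto
  moreover have "convex ((\<lambda>z::real^'d. z$k) -` cset (E k))" for k
    by (intro convex_linear_vimage bounded_linear.linear[OF bounded_linear_vec_nth])
      (cases "E k"; simp add: convex_real_interval)
  ultimately show ?thesis
    by (auto intro: convex_INT)
qed

definition center :: "'d::finite ent \<Rightarrow> real^'d" where
  "center E = (\<chi> k. (real_of_int (clo (E k)) + real_of_int (chi (E k))) / 2)"

lemma center_in_eset:
  assumes "\<And>k. wf_comp (Nf k) (E k)"
  shows "center E \<in> eset E"
  unfolding center_def mem_eset
proof
  fix k
  show "(\<chi> k. (real_of_int (clo (E k)) + real_of_int (chi (E k))) / 2) $ k \<in> cset (E k)"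
    using assms[of k] unfolding wf_comp_def by (cases "E k") auto
qed

lemma segment_in_open_interval:
  fixes a b z c t :: real
  assumes "a \<le> z" "z \<le> b" "a < c" "c < b" "0 < t" "t \<le> 1"
  shows "a < z + t * (c - z) \<and> z + t * (c - z) < b"
proof -
  have "0 \<le> (1 - t) * (z - a)" "0 < t * (c - a)" "0 \<le> (1 - t) * (b - z)" "0 < t * (b - c)"
    using assms by simp_all
  moreover have "z + t * (c - z) - a = (1 - t) * (z - a) + t * (c - a)"
    "b - (z + t * (c - z)) = (1 - t) * (b - z) + t * (b - c)"
    by (simp_all add: algebra_simps)
  ultimately show ?thesis
    by linarith
qed

lemma closure_eset:
  assumes wf: "\<And>k. wf_comp (Nf k) (E k)"
  shows "closure (eset E) = ebox E"
proof
  show "closure (eset E) \<subseteq> ebox E"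
    unfolding ebox_def by (rule closure_minimal[OF eset_subset_ebox[unfolded ebox_def] closed_cbox])
  show "ebox E \<subseteq> closure (eset E)"
  proof
    fix z
    assume z: "z \<in> ebox E"
    define c where "c = center E"
    have c: "c \<in> eset E"
      unfolding c_def using center_in_eset[OF wf] .
    have "z + t *\<^sub>R (c - z) \<in> eset E" if t: "0 < t" "t \<le> 1" for t
      unfolding mem_eset
    proof
      fix k
      have zk: "real_of_int (clo (E k)) \<le> z$k" "z$k \<le> real_of_int (chi (E k))"
        using z unfolding mem_ebox by auto
      have ck: "c$k \<in> cset (E k)"
        using c unfolding mem_eset by auto
      show "(z + t *\<^sub>R (c - z))$k \<in> cset (E k)"
      proof (cases "E k")
        case (Pt m)
        then show ?thesis using zk ck by simp
      next
        case (Iv a b)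
        then show ?thesis
          using segment_in_open_interval[of a "z$k" b "c$k" t] zk ck t by simp
      qed
    qed
    then have "\<forall>\<^sub>F t in at_right 0. z + t *\<^sub>R (c - z) \<in> closure (eset E)"
      unfolding eventually_at_right_field by (intro exI[of _ 1]) (auto intro: closure_subset[THEN subsetD])
    moreover have "((\<lambda>t. z + t *\<^sub>R (c - z)) \<longlongrightarrow> z) (at_right 0)"
      by (intro tendsto_eq_intros) auto
    ultimately show "z \<in> closure (eset E)"
      using Lim_in_closed_set[OF closed_closure] by (metis trivial_limit_at_right_real)
  qed
qed

section \<open>Dyadic subintervals\<close>

inductive dyadic_subinterval :: "int \<Rightarrow> int \<Rightarrow> int \<Rightarrow> int \<Rightarrow> bool" where
  whole: "g < h \<Longrightarrow> dyadic_subinterval g h g h"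
| left: "dyadic_subinterval g m a b \<Longrightarrow> g + h = 2 * m \<Longrightarrow> dyadic_subinterval g h a b"
| right: "dyadic_subinterval m h a b \<Longrightarrow> g + h = 2 * m \<Longrightarrow> dyadic_subinterval g h a b"

lemma dyadic_subinterval_bounds: "dyadic_subinterval g h a b \<Longrightarrow> g \<le> a \<and> a < b \<and> b \<le> h"
  by (induction rule: dyadic_subinterval.induct) auto

lemma dyadic_subinterval_halves:
  assumes "dyadic_subinterval g h a b" "a + b = 2 * m"
  shows "dyadic_subinterval g h a m \<and> dyadic_subinterval g h m b"
  using assms
proof (induction rule: dyadic_subinterval.induct)
  case (whole g h)
  then have "dyadic_subinterval g m g m" "dyadic_subinterval m h m h"
    by (auto intro: dyadic_subinterval.whole)
  then show ?case
    using whole(2) by (auto intro: dyadic_subinterval.left dyadic_subinterval.right)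
qed (auto intro: dyadic_subinterval.intros)

lemma dyadic_subinterval_in_half:
  assumes "dyadic_subinterval g h a b" "dyadic_subinterval g h c e"
    and "a \<le> c" "e \<le> b" "(c, e) \<noteq> (a, b)" "a + b = 2 * m"
  shows "e \<le> m \<or> m \<le> c"
  using assms
proof (induction arbitrary: c e rule: dyadic_subinterval.induct)
  case (whole g h)
  from whole.prems(1) show ?case
  proof cases
    case (left m')
    then show ?thesis
      using whole.prems(5) dyadic_subinterval_bounds[of g m' c e] by simp
  next
    case (right m')
    then show ?thesis
      using whole.prems(5) dyadic_subinterval_bounds[of m' h c e] by simp
  qed (use whole.prems in simp)
next
  case (left g m' a b h)
  note hyps = left.hyps and IH = left.IH and prems = left.prems
  from prems(1) show ?case
  proof cases
    case (left m'')
    then have "m'' = m'"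
      using hyps(2) by simp
    then show ?thesis
      using IH[of c e] prems(2-) left(1) by simp
  next
    case whole
    then show ?thesis
      using prems(2,3) dyadic_subinterval_bounds[OF hyps(1)] hyps(2) by simp
  next
    case (right m'')
    then show ?thesis
      using prems(2,3) dyadic_subinterval_bounds[OF hyps(1)] dyadic_subinterval_bounds[of m'' h c e] hyps(2)
      by simp
  qed
next
  case (right m' h a b g)
  note hyps = right.hyps and IH = right.IH and prems = right.prems
  from prems(1) show ?case
  proof cases
    case (right m'')
    then have "m'' = m'"
      using hyps(2) by simp
    then show ?thesis
      using IH[of c e] prems(2-) right(1) by simp
  next
    case whole
    then show ?thesis
      using prems(2,3) dyadic_subinterval_bounds[OF hyps(1)] hyps(2) by simp
  next
    case (left m'')
    then show ?thesis
      using prems(2,3) dyadic_subinterval_bounds[OF hyps(1)] dyadic_subinterval_bounds[of g m'' c e] hyps(2)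
      by simp
  qed
qed

definition grid_interval :: "int set \<Rightarrow> int \<Rightarrow> int \<Rightarrow> bool" where
  "grid_interval G a b \<longleftrightarrow> a \<in> G \<and> b \<in> G \<and> a < b \<and> (\<forall>g\<in>G. \<not> (a < g \<and> g < b))"

lemma grid_interval_unique:
  assumes "grid_interval G a b" "grid_interval G c e" "c < b" "a < e"
  shows "a = c \<and> b = e"
  using assms unfolding grid_interval_def by (metis linorder_neqE_linordered_idom order.strict_trans)

definition dyadic_comp :: "int set \<Rightarrow> comp \<Rightarrow> bool" where
  "dyadic_comp G c =
     (case c of Pt _ \<Rightarrow> True | Iv a b \<Rightarrow> \<exists>g h. grid_interval G g h \<and> dyadic_subinterval g h a b)"

lemma dyadic_comp_Pt [simp]: "dyadic_comp G (Pt m)"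
  unfolding dyadic_comp_def by simp

lemma dyadic_comp_halves:
  assumes "dyadic_comp G (Iv a b)" "a + b = 2 * m"
  shows "dyadic_comp G (Iv a m) \<and> dyadic_comp G (Iv m b)"
proof -
  obtain g h where "grid_interval G g h" "dyadic_subinterval g h a b"
    using assms(1) unfolding dyadic_comp_def by auto
  then show ?thesis
    using dyadic_subinterval_halves[OF _ assms(2)] unfolding dyadic_comp_def comp.case by blast
qed

lemma dyadic_comp_in_half:
  assumes "dyadic_comp G (Iv a b)" "dyadic_comp G (Iv c e)"
    and "a \<le> c" "e \<le> b" "(c, e) \<noteq> (a, b)" "a + b = 2 * m"
  shows "e \<le> m \<or> m \<le> c"
proof -
  obtain g h g' h' where gh: "grid_interval G g h" "dyadic_subinterval g h a b"
    and gh': "grid_interval G g' h'" "dyadic_subinterval g' h' c e"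
    using assms(1,2) unfolding dyadic_comp_def by auto
  have "g' = g \<and> h' = h"
    using grid_interval_unique[OF gh'(1) gh(1)] assms(3,4)
      dyadic_subinterval_bounds[OF gh(2)] dyadic_subinterval_bounds[OF gh'(2)] by linarith
  then show ?thesis
    using dyadic_subinterval_in_half[OF gh(2) _ assms(3-6)] gh'(2) by simp
qed

section \<open>Meshes as box complexes\<close>

locale box_complex =
  fixes N :: "'d::finite \<Rightarrow> nat" and M :: "'d ent set"
  assumes finite_mesh: "finite M"
    and wf: "E \<in> M \<Longrightarrow> wf_comp (N k) (E k)"
    and disjoint: "E \<in> M \<Longrightarrow> E' \<in> M \<Longrightarrow> (\<And>k. cset (E k) \<inter> cset (E' k) \<noteq> {}) \<Longrightarrow> E = E'"
    and covers: "z \<in> cOmega N \<Longrightarrow> \<exists>E\<in>M. z \<in> eset E"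
    and meets_closure_imp_within:
      "E \<in> M \<Longrightarrow> E' \<in> M \<Longrightarrow> (\<And>k. meets_closure (E k) (E' k)) \<Longrightarrow> within_closure (E k) (E' k)"

definition grid_comp :: "int set \<Rightarrow> comp \<Rightarrow> bool" where
  "grid_comp G c = (case c of Pt g \<Rightarrow> g \<in> G | Iv a b \<Rightarrow> grid_interval G a b)"

lemma tensor_mesh_eq: "tensor_mesh G = {E. \<forall>k. grid_comp (G k) (E k)}"
  unfolding tensor_mesh_def grid_comp_def grid_interval_def by simp

lemma grid_comp_eq:
  assumes "grid_comp G c" "grid_comp G c'" "cset c \<inter> cset c' \<noteq> {}"
  shows "c = c'"
proof -
  obtain x where x: "x \<in> cset c" "x \<in> cset c'"
    using assms(3) by blast
  show ?thesis
  proof (cases c; cases c')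
    fix a b a' b'
    assume "c = Iv a b" "c' = Iv a' b'"
    moreover have "real_of_int a < real_of_int b'" "real_of_int a' < real_of_int b"
      using x calculation by auto
    then have "a < b'" "a' < b"
      by simp_all
    ultimately show ?thesis
      using assms(1,2) grid_interval_unique[of G a b a' b'] unfolding grid_comp_def by simp
  qed (use assms x in \<open>auto simp: grid_comp_def grid_interval_def\<close>)
qed

lemma grid_comp_meets_closure_imp_within:
  assumes "grid_comp G c" "grid_comp G c'" "meets_closure c c'"
  shows "within_closure c c'"
proof (cases c; cases c')
  fix a b a' b'
  assume "c = Iv a b" "c' = Iv a' b'"
  then show ?thesis
    using assms grid_interval_unique[of G a b a' b']
    unfolding grid_comp_def meets_closure_def within_closure_def by simp
qed (use assms in \<open>auto simp: grid_comp_def grid_interval_def meets_closure_def within_closure_def\<close>)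

lemma grid_comp_cover:
  assumes G: "G \<subseteq> {0..int Nk}" "0 \<in> G" "int Nk \<in> G" and z: "0 \<le> z" "z \<le> real Nk"
  shows "\<exists>c. grid_comp G c \<and> z \<in> cset c"
proof (cases "\<exists>g\<in>G. real_of_int g = z")
  case True
  then show ?thesis
    by (metis cset.simps(1) grid_comp_def comp.simps(5) singletonI)
next
  case False
  have fin: "finite G"
    using G(1) finite_subset by blast
  define a where "a = Max {g\<in>G. real_of_int g \<le> z}"
  define b where "b = Min {g\<in>G. z < real_of_int g}"
  have L: "finite {g\<in>G. real_of_int g \<le> z}" "0 \<in> {g\<in>G. real_of_int g \<le> z}"
    and U: "finite {g\<in>G. z < real_of_int g}" "int Nk \<in> {g\<in>G. z < real_of_int g}"
    using fin G z False by force+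
  have "a \<in> {g\<in>G. real_of_int g \<le> z}" "b \<in> {g\<in>G. z < real_of_int g}"
    unfolding a_def b_def using Max_in[OF L(1)] Min_in[OF U(1)] L(2) U(2) by blast+
  then have "a \<in> G" "real_of_int a \<le> z" "b \<in> G" "z < real_of_int b"
    by auto
  moreover have "\<not> (a < g \<and> g < b)" if "g \<in> G" for g
  proof (cases "real_of_int g \<le> z")
    case True
    then show ?thesis
      using that Max_ge[OF L(1)] unfolding a_def by force
  next
    case False
    then show ?thesis
      using that Min_le[OF U(1)] unfolding b_def by force
  qed
  ultimately show ?thesis
    using False by (intro exI[of _ "Iv a b"]) (auto simp: grid_comp_def grid_interval_def)
qed

lemma tensor_mesh_finite:
  assumes "\<And>k. finite (G k)"
  shows "finite (tensor_mesh G)"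
proof -
  define C where "C k = Pt ` G k \<union> (\<lambda>(a, b). Iv a b) ` (G k \<times> G k)" for k
  have "E k \<in> C k" if "E \<in> tensor_mesh G" for E k
  proof -
    have "grid_comp (G k) (E k)"
      using that unfolding tensor_mesh_eq by simp
    then show ?thesis
      unfolding C_def by (cases "E k") (auto simp: grid_comp_def grid_interval_def image_iff)
  qed
  then have "tensor_mesh G \<subseteq> PiE UNIV C"
    by (auto simp: PiE_UNIV_domain)
  moreover have "finite (PiE UNIV C)"
    using assms unfolding C_def by (intro finite_PiE) auto
  ultimately show ?thesis
    by (rule finite_subset)
qed

lemma tensor_mesh_box_complex:
  assumes "grids_ok N p G"
  shows "box_complex N (tensor_mesh G)"
proof
  have G: "G k \<subseteq> {0..int (N k)}" "0 \<in> G k" "int (N k) \<in> G k" for k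
    using assms unfolding grids_ok_def by auto
  then show "finite (tensor_mesh G)"
    by (intro tensor_mesh_finite) (meson finite_atLeastAtMost_int finite_subset)
  show "wf_comp (N k) (E k)" if "E \<in> tensor_mesh G" for E k
  proof -
    have "grid_comp (G k) (E k)"
      using that unfolding tensor_mesh_eq by simp
    then show ?thesis
      using G(1)[of k] by (cases "E k") (auto simp: grid_comp_def grid_interval_def wf_comp_def)
  qed
  show "E = E'" if "E \<in> tensor_mesh G" "E' \<in> tensor_mesh G" "\<And>k. cset (E k) \<inter> cset (E' k) \<noteq> {}"
    for E E'
    using that grid_comp_eq unfolding tensor_mesh_eq by blast
  show "\<exists>E\<in>tensor_mesh G. z \<in> eset E" if "z \<in> cOmega N" for z
  proof -
    have "\<forall>k. \<exists>c. grid_comp (G k) c \<and> z$k \<in> cset c"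
      using that grid_comp_cover[OF G] unfolding cOmega_def by auto
    then obtain E where "\<forall>k. grid_comp (G k) (E k) \<and> z$k \<in> cset (E k)"
      by metis
    then show ?thesis
      unfolding tensor_mesh_eq mem_eset by auto
  qed
  show "within_closure (E k) (E' k)"
    if "E \<in> tensor_mesh G" "E' \<in> tensor_mesh G" "\<And>k. meets_closure (E k) (E' k)" for E E' k
    using that grid_comp_meets_closure_imp_within unfolding tensor_mesh_eq by blast
qed

lemma tensor_mesh_dyadic:
  assumes "E \<in> tensor_mesh G"
  shows "dyadic_comp (G k) (E k)"
proof -
  have "grid_comp (G k) (E k)"
    using assms unfolding tensor_mesh_eq by simp
  then show ?thesis
    unfolding dyadic_comp_def grid_comp_def
    by (cases "E k") (auto simp: grid_interval_def intro: dyadic_subinterval.whole)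
qed

lemma meets_closure_mono: "meets_closure c c1 \<Longrightarrow> within_closure c1 c2 \<Longrightarrow> meets_closure c c2"
  unfolding meets_closure_def within_closure_def by (cases c) auto

lemma closed_subdiv_region: "closed (subdiv_region N p Q j)"
proof -
  define lo where "lo l = (if l = j then real_of_int (clo (Q j))
    else if clo (Q l) = int (qq p l) then 0 else real_of_int (clo (Q l)))" for l
  define hi where "hi l = (if l = j then real_of_int (chi (Q j))
    else if chi (Q l) = int (N l) - int (qq p l) then real (N l) else real_of_int (chi (Q l)))" for l
  have "(if l = j then real_of_int (clo (Q j)) \<le> z$l \<and> z$l \<le> real_of_int (chi (Q j))
      else (if clo (Q l) = int (qq p l) then 0 else real_of_int (clo (Q l))) \<le> z$l
         \<and> z$l \<le> (if chi (Q l) = int (N l) - int (qq p l) then real (N l) else real_of_int (chi (Q l))))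
    \<longleftrightarrow> lo l \<le> z$l \<and> z$l \<le> hi l" for z l
    unfolding lo_def hi_def by simp
  then have "subdiv_region N p Q j = cbox (\<chi> l. lo l) (\<chi> l. hi l)"
    unfolding subdiv_region_def set_eq_iff mem_box_cart vec_lambda_beta mem_Collect_eq by presburger
  then show ?thesis
    by (metis closed_cbox)
qed

locale subdivision_step = box_complex N M for N :: "'d::finite \<Rightarrow> nat" and M +
  fixes p :: "'d \<Rightarrow> nat" and G :: "'d \<Rightarrow> int set" and Q :: "'d ent" and j :: 'd
  assumes dyadic: "E \<in> M \<Longrightarrow> dyadic_comp (G k) (E k)"
    and Q_in: "Q \<in> M" and Q_cell: "is_cell Q" and Q_even: "even (clo (Q j) + chi (Q j))"
begin

definition mid :: int where
  "mid = (clo (Q j) + chi (Q j)) div 2"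

definition affected :: "'d ent \<Rightarrow> bool" where
  "affected E \<longleftrightarrow> E \<in> M \<and> eset E \<subseteq> subdiv_region N p Q j \<and> E j = Q j"

definition pieces :: "comp set" where
  "pieces = {Iv (clo (Q j)) mid, Pt mid, Iv mid (chi (Q j))}"

lemma mem_subdiv:
  "E \<in> subdiv N p M Q j \<longleftrightarrow> (E \<in> M \<and> \<not> affected E) \<or> (\<exists>E0 c. affected E0 \<and> c \<in> pieces \<and> E = E0(j := c))"
  unfolding subdiv_def Let_def affected_def pieces_def mid_def by auto

lemma Q_j: "Q j = Iv (clo (Q j)) (chi (Q j))" and lo_mid: "clo (Q j) < mid" and mid_hi: "mid < chi (Q j)"
  and lo_hi_mid: "clo (Q j) + chi (Q j) = 2 * mid"
proof -
  show "Q j = Iv (clo (Q j)) (chi (Q j))"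
    using Q_cell unfolding is_cell_def by (metis comp.exhaust chi.simps(2) clo.simps(2) is_iv.simps(1))
  moreover have "clo (Q j) < chi (Q j)"
    using wf[OF Q_in, of j] Q_cell unfolding wf_comp_def is_cell_def by simp
  moreover show "clo (Q j) + chi (Q j) = 2 * mid"
    using Q_even unfolding mid_def by simp
  ultimately show "clo (Q j) < mid" "mid < chi (Q j)"
    by linarith+
qed

lemma pieces_within: "c \<in> pieces \<Longrightarrow> within_closure c (Q j)"
  unfolding pieces_def within_closure_def using lo_mid mid_hi by auto

lemma pieces_wf: "c \<in> pieces \<Longrightarrow> wf_comp (N j) c"
  using wf[OF Q_in, of j] lo_mid mid_hi unfolding pieces_def wf_comp_def by auto

lemma dyadic_Q_j: "dyadic_comp (G j) (Iv (clo (Q j)) (chi (Q j)))"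
  using dyadic[OF Q_in, of j] by (simp add: Q_j[symmetric])

lemma pieces_dyadic: "c \<in> pieces \<Longrightarrow> dyadic_comp (G j) c"
  using dyadic_comp_halves[OF dyadic_Q_j lo_hi_mid] unfolding pieces_def by auto

lemma cset_Q_j: "cset (Q j) = {real_of_int (clo (Q j)) <..< real_of_int (chi (Q j))}"
  by (subst Q_j) simp

lemma pieces_cset: "c \<in> pieces \<Longrightarrow> cset c \<subseteq> cset (Q j)"
  using lo_mid mid_hi unfolding cset_Q_j pieces_def by auto

lemma pieces_cover: "x \<in> cset (Q j) \<Longrightarrow> \<exists>c\<in>pieces. x \<in> cset c"
  unfolding cset_Q_j pieces_def by (cases x "real_of_int mid" rule: linorder_cases) auto

lemma pieces_disjoint: "c \<in> pieces \<Longrightarrow> c' \<in> pieces \<Longrightarrow> cset c \<inter> cset c' \<noteq> {} \<Longrightarrow> c = c'"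
  using lo_mid mid_hi unfolding pieces_def by (auto simp: disjoint_iff)

lemma pieces_meets_closure_imp_within:
  "c \<in> pieces \<Longrightarrow> c' \<in> pieces \<Longrightarrow> meets_closure c c' \<Longrightarrow> within_closure c c'"
  using lo_mid mid_hi unfolding pieces_def meets_closure_def within_closure_def by auto

lemma piece_meets_closure: "c \<in> pieces \<Longrightarrow> meets_closure c c' \<Longrightarrow> meets_closure (Q j) c'"
  using lo_mid mid_hi by (subst Q_j) (auto simp: pieces_def meets_closure_def)

text \<open>This is where the dyadic structure is needed: a proper dyadic subinterval of \<open>Q j\<close> lies in one
  of its halves.\<close>

lemma within_piece:
  assumes "dyadic_comp (G j) e" "within_closure e (Q j)" "e \<noteq> Q j"
    and "meets_closure e c" "c \<in> pieces"
  shows "within_closure e c"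
proof (cases e)
  case (Pt t)
  then show ?thesis
    using assms(4) unfolding meets_closure_def within_closure_def by auto
next
  case (Iv a b)
  have "Iv a b \<noteq> Iv (clo (Q j)) (chi (Q j))"
    using assms(3) Iv by (simp add: Q_j[symmetric])
  then have "b \<le> mid \<or> mid \<le> a"
    using dyadic_comp_in_half[OF dyadic_Q_j assms(1)[unfolded Iv] _ _ _ lo_hi_mid] assms(2) Iv
    unfolding within_closure_def by simp
  then show ?thesis
    using assms(2,4,5) Iv unfolding pieces_def meets_closure_def within_closure_def by auto
qed

lemma subdiv_parent:
  assumes "E \<in> subdiv N p M Q j"
  obtains P where "P \<in> M" "\<And>k. k \<noteq> j \<Longrightarrow> E k = P k" "within_closure (E j) (P j)"
    "cset (E j) \<subseteq> cset (P j)" "affected P \<Longrightarrow> E j \<in> pieces \<and> P j = Q j" "\<not> affected P \<Longrightarrow> E = P"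
proof -
  consider "E \<in> M" "\<not> affected E" | E0 c where "affected E0" "c \<in> pieces" "E = E0(j := c)"
    using assms mem_subdiv by blast
  then show ?thesis
  proof cases
    case 1
    then show ?thesis
      using that[of E] by (simp add: within_closure_def)
  next
    case 2
    then show ?thesis
      using that[of E0] pieces_within pieces_cset unfolding affected_def by auto
  qed
qed

lemma subdiv_finite: "finite (subdiv N p M Q j)"
proof -
  have "subdiv N p M Q j \<subseteq> M \<union> (\<Union>E0\<in>M. (\<lambda>c. E0(j := c)) ` pieces)"
    using mem_subdiv unfolding affected_def by auto
  moreover have "finite (M \<union> (\<Union>E0\<in>M. (\<lambda>c. E0(j := c)) ` pieces))"
    using finite_mesh unfolding pieces_def by auto
  ultimately show ?thesis
    by (rule finite_subset)
qed

lemma subdiv_wf_dyadic: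
  assumes "E \<in> subdiv N p M Q j"
  shows "wf_comp (N k) (E k) \<and> dyadic_comp (G k) (E k)"
  using assms mem_subdiv wf dyadic pieces_wf pieces_dyadic unfolding affected_def
  by (cases "k = j") auto

lemma subdiv_disjoint:
  assumes E: "E \<in> subdiv N p M Q j" and E': "E' \<in> subdiv N p M Q j"
    and meet: "\<And>k. cset (E k) \<inter> cset (E' k) \<noteq> {}"
  shows "E = E'"
proof -
  obtain P where P: "P \<in> M" "\<And>k. k \<noteq> j \<Longrightarrow> E k = P k" "cset (E j) \<subseteq> cset (P j)"
    "affected P \<Longrightarrow> E j \<in> pieces" "\<not> affected P \<Longrightarrow> E = P"
    using subdiv_parent[OF E] by metis
  obtain P' where P': "P' \<in> M" "\<And>k. k \<noteq> j \<Longrightarrow> E' k = P' k" "cset (E' j) \<subseteq> cset (P' j)"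
    "affected P' \<Longrightarrow> E' j \<in> pieces" "\<not> affected P' \<Longrightarrow> E' = P'"
    using subdiv_parent[OF E'] by metis
  have "cset (P k) \<inter> cset (P' k) \<noteq> {}" for k
    using meet[of k] P(2,3) P'(2,3) by (cases "k = j") auto
  then have "P' = P"
    using disjoint[OF P(1) P'(1)] by metis
  show ?thesis
  proof (cases "affected P")
    case True
    then have "E j = E' j"
      using pieces_disjoint P(4) P'(4) meet[of j] \<open>P' = P\<close> by blast
    then show ?thesis
      using P(2) P'(2) \<open>P' = P\<close> by (metis ext)
  next
    case False
    then show ?thesis
      using P(5) P'(5) \<open>P' = P\<close> by simp
  qed
qed

lemma subdiv_covers:
  assumes "z \<in> cOmega N"
  shows "\<exists>E\<in>subdiv N p M Q j. z \<in> eset E"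
proof -
  obtain E where E: "E \<in> M" "z \<in> eset E"
    using covers[OF assms] by blast
  show ?thesis
  proof (cases "affected E")
    case True
    then obtain c where "c \<in> pieces" "z$j \<in> cset c"
      using pieces_cover E(2) unfolding affected_def mem_eset by metis
    then show ?thesis
      using True E(2) mem_subdiv by (intro bexI[of _ "E(j := c)"]) (auto simp: mem_eset)
  next
    case False
    then show ?thesis
      using E mem_subdiv by blast
  qed
qed

lemma closure_subset_subdiv_region:
  assumes "affected E"
  shows "ebox E \<subseteq> subdiv_region N p Q j"
proof -
  have "ebox E = closure (eset E)"
    using closure_eset[of N E] wf assms unfolding affected_def by simp
  moreover have "eset E \<subseteq> subdiv_region N p Q j"
    using assms unfolding affected_def by simp
  ultimately show ?thesis
    using closure_minimal[OF _ closed_subdiv_region] by metis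
qed

lemma subdiv_meets_closure_imp_within:
  assumes E: "E \<in> subdiv N p M Q j" and E': "E' \<in> subdiv N p M Q j"
    and meet: "\<And>k. meets_closure (E k) (E' k)"
  shows "within_closure (E k) (E' k)"
proof -
  obtain P where P: "P \<in> M" "\<And>k. k \<noteq> j \<Longrightarrow> E k = P k" "within_closure (E j) (P j)"
    "affected P \<Longrightarrow> E j \<in> pieces \<and> P j = Q j" "\<not> affected P \<Longrightarrow> E = P"
    using subdiv_parent[OF E] by metis
  obtain P' where P': "P' \<in> M" "\<And>k. k \<noteq> j \<Longrightarrow> E' k = P' k" "within_closure (E' j) (P' j)"
    "affected P' \<Longrightarrow> E' j \<in> pieces \<and> P' j = Q j" "\<not> affected P' \<Longrightarrow> E' = P'"
    using subdiv_parent[OF E'] by metis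
  have "meets_closure (P k) (P' k)" for k
  proof (cases "k = j")
    case True
    have "meets_closure (E j) (P' j)"
      using meets_closure_mono[OF meet P'(3)] .
    then show ?thesis
      using True P(4,5) piece_meets_closure by (cases "affected P") auto
  qed (use meet P(2) P'(2) in metis)
  then have PP': "within_closure (P k) (P' k)" for k
    using meets_closure_imp_within[OF P(1) P'(1)] by blast
  show ?thesis
  proof (cases "k = j")
    case False
    then show ?thesis
      using PP' P(2) P'(2) by metis
  next
    case True
    consider "\<not> affected P'" | "affected P'" "affected P" | "affected P'" "\<not> affected P"
      by blast
    then show ?thesis
    proof cases
      case 1
      then show ?thesis
        using True within_closure_trans[OF P(3) PP'] P'(5) by simp
    next
      case 2
      then show ?thesis
        using True P(4) P'(4) meet pieces_meets_closure_imp_within by blast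
    next
      case 3
      have "ebox P \<subseteq> ebox P'"
        using ebox_mono PP' by blast
      then have "eset P \<subseteq> subdiv_region N p Q j"
        using eset_subset_ebox closure_subset_subdiv_region[OF 3(1)] by blast
      then have "P j \<noteq> Q j"
        using 3(2) P(1) unfolding affected_def by blast
      moreover have "E = P" "P' j = Q j" "E' j \<in> pieces"
        using P(5) P'(4) 3 by auto
      ultimately show ?thesis
        using within_piece[OF dyadic[OF P(1), of j]] PP'[of j] meet[of j] True by simp
    qed
  qed
qed

lemma subdiv_box_complex: "box_complex N (subdiv N p M Q j)"
proof
  show "finite (subdiv N p M Q j)"
    by (rule subdiv_finite)
  show "wf_comp (N k) (E k)" if "E \<in> subdiv N p M Q j" for E k
    using subdiv_wf_dyadic[OF that] by simp
qed (fact subdiv_disjoint subdiv_covers subdiv_meets_closure_imp_within)+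

end

lemma mesh_gen_box_complex:
  assumes "mesh_gen N p M"
  shows "box_complex N M \<and> (\<exists>G. \<forall>E\<in>M. \<forall>k. dyadic_comp (G k) (E k))"
  using assms
proof (induction rule: mesh_gen.induct)
  case (init G)
  then show ?case
    using tensor_mesh_box_complex tensor_mesh_dyadic by blast
next
  case (step T Q j)
  then obtain G where "box_complex N T" "\<And>E k. E \<in> T \<Longrightarrow> dyadic_comp (G k) (E k)"
    by blast
  then interpret subdivision_step N T p G Q j
    using step.hyps by (intro subdivision_step.intro subdivision_step_axioms.intro) simp_all
  show ?case
    using subdiv_box_complex subdiv_wf_dyadic by blast
qed

section \<open>Rays leaving a point\<close>

text \<open>\<open>inward lo hi w v\<close>: the direction \<open>v\<close> does not immediately leave \<open>cbox lo hi\<close> at \<open>w\<close>.\<close>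

definition inward :: "real^'d \<Rightarrow> real^'d \<Rightarrow> real^'d \<Rightarrow> real^'d \<Rightarrow> bool" where
  "inward lo hi w v \<longleftrightarrow> (\<forall>k. (0 < v$k \<longrightarrow> w$k < hi$k) \<and> (v$k < 0 \<longrightarrow> lo$k < w$k))"

lemma eventually_at_right_0_less: "a < c \<Longrightarrow> \<forall>\<^sub>F \<eta> in at_right 0. a + \<eta> * s < (c::real)"
proof -
  assume "a < c"
  moreover have "((\<lambda>\<eta>. a + \<eta> * s) \<longlongrightarrow> a) (at_right 0)"
    by (intro tendsto_eq_intros) auto
  ultimately show ?thesis
    by (auto dest: order_tendstoD(2))
qed

lemma eventually_at_right_0_greater: "c < a \<Longrightarrow> \<forall>\<^sub>F \<eta> in at_right 0. c < a + \<eta> * (s::real)"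
proof -
  assume "c < a"
  moreover have "((\<lambda>\<eta>. a + \<eta> * s) \<longlongrightarrow> a) (at_right 0)"
    by (intro tendsto_eq_intros) auto
  ultimately show ?thesis
    by (auto dest: order_tendstoD(1))
qed

lemma eventually_ray_in_cbox_iff:
  fixes w v :: "real^'d::finite"
  shows "(\<forall>\<^sub>F \<eta> in at_right 0. w + \<eta> *\<^sub>R v \<in> cbox lo hi) \<longleftrightarrow> w \<in> cbox lo hi \<and> inward lo hi w v"
proof
  assume ev: "\<forall>\<^sub>F \<eta> in at_right 0. w + \<eta> *\<^sub>R v \<in> cbox lo hi"
  have "((\<lambda>\<eta>. w + \<eta> *\<^sub>R v) \<longlongrightarrow> w) (at_right 0)"
    by (intro tendsto_eq_intros) auto
  then have w: "w \<in> cbox lo hi"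
    using Lim_in_closed_set[OF closed_cbox ev] by simp
  have "inward lo hi w v"
    unfolding inward_def
  proof (intro allI conjI impI; rule ccontr)
    fix k
    assume k: "0 < v$k" "\<not> w$k < hi$k"
    have "\<forall>\<^sub>F \<eta> in at_right 0. w + \<eta> *\<^sub>R v \<notin> cbox lo hi"
      using eventually_at_right_less
    proof eventually_elim
      fix \<eta> :: real
      assume "0 < \<eta>"
      then have "0 < \<eta> * v$k"
        using k by simp
      then have "hi$k < (w + \<eta> *\<^sub>R v)$k"
        using k by simp
      then show "w + \<eta> *\<^sub>R v \<notin> cbox lo hi"
        by (auto simp: mem_box_cart not_le)
    qed
    then show False
      using eventually_happens[OF eventually_conj[OF _ ev]] by auto
  next
    fix k
    assume k: "v$k < 0" "\<not> lo$k < w$k"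
    have "\<forall>\<^sub>F \<eta> in at_right 0. w + \<eta> *\<^sub>R v \<notin> cbox lo hi"
      using eventually_at_right_less
    proof eventually_elim
      fix \<eta> :: real
      assume "0 < \<eta>"
      then have "\<eta> * v$k < 0"
        using k by (simp add: mult_pos_neg)
      then have "(w + \<eta> *\<^sub>R v)$k < lo$k"
        using k by simp
      then show "w + \<eta> *\<^sub>R v \<notin> cbox lo hi"
        by (auto simp: mem_box_cart not_le)
    qed
    then show False
      using eventually_happens[OF eventually_conj[OF _ ev]] by auto
  qed
  then show "w \<in> cbox lo hi \<and> inward lo hi w v"
    using w by simp
next
  assume "w \<in> cbox lo hi \<and> inward lo hi w v"
  then have w: "lo$k \<le> w$k" "w$k \<le> hi$k" and inw: "0 < v$k \<Longrightarrow> w$k < hi$k" "v$k < 0 \<Longrightarrow> lo$k < w$k"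
    for k
    unfolding inward_def by (auto simp: mem_box_cart)
  have comp: "\<forall>\<^sub>F \<eta> in at_right 0. lo$k \<le> w$k + \<eta> * v$k \<and> w$k + \<eta> * v$k \<le> hi$k" for k
  proof (cases "v$k" "0::real" rule: linorder_cases)
    case less
    show ?thesis
      using eventually_at_right_less eventually_at_right_0_greater[OF inw(2)[OF less], of "v$k"]
    proof eventually_elim
      fix \<eta> :: real
      assume "0 < \<eta>" "lo$k < w$k + \<eta> * v$k"
      moreover have "\<eta> * v$k < 0"
        using \<open>0 < \<eta>\<close> less by (simp add: mult_pos_neg)
      ultimately show "lo$k \<le> w$k + \<eta> * v$k \<and> w$k + \<eta> * v$k \<le> hi$k"
        using w[of k] by simp
    qed
  next
    case equal
    then show ?thesis
      using w by simp
  next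
    case greater
    show ?thesis
      using eventually_at_right_less eventually_at_right_0_less[OF inw(1)[OF greater], of "v$k"]
    proof eventually_elim
      fix \<eta> :: real
      assume "0 < \<eta>" "w$k + \<eta> * v$k < hi$k"
      moreover have "0 < \<eta> * v$k"
        using \<open>0 < \<eta>\<close> greater by simp
      ultimately show "lo$k \<le> w$k + \<eta> * v$k \<and> w$k + \<eta> * v$k \<le> hi$k"
        using w[of k] by simp
    qed
  qed
  show "\<forall>\<^sub>F \<eta> in at_right 0. w + \<eta> *\<^sub>R v \<in> cbox lo hi"
    unfolding mem_box_cart by (rule eventually_all_finite) (use comp in simp)
qed

lemma eventually_ray_in_box:
  fixes w v :: "real^'d::finite"
  assumes "w \<in> cbox lo hi" "inward lo hi w v" and flat: "\<And>k. v$k = 0 \<Longrightarrow> lo$k < w$k \<and> w$k < hi$k"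
  shows "\<forall>\<^sub>F \<eta> in at_right 0. w + \<eta> *\<^sub>R v \<in> box lo hi"
proof -
  have comp: "\<forall>\<^sub>F \<eta> in at_right 0. lo$k < w$k + \<eta> * v$k \<and> w$k + \<eta> * v$k < hi$k" for k
  proof -
    have wk: "lo$k \<le> w$k" "w$k \<le> hi$k"
      using assms(1) by (simp_all add: mem_box_cart)
    have ev: "\<forall>\<^sub>F \<eta> in at_right 0. lo$k \<le> w$k + \<eta> * v$k \<and> w$k + \<eta> * v$k \<le> hi$k"
      using assms(1,2) eventually_ray_in_cbox_iff[of w v lo hi]
      by (auto simp: mem_box_cart elim: eventually_mono)
    show ?thesis
    proof (cases "v$k" "0::real" rule: linorder_cases)
      case less
      then have "lo$k < w$k"
        using assms(2) unfolding inward_def by simp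
      show ?thesis
        using ev eventually_at_right_less eventually_at_right_0_greater[OF \<open>lo$k < w$k\<close>, of "v$k"]
      proof eventually_elim
        case (elim \<eta>)
        moreover have "\<eta> * v$k < 0"
          using elim less by (simp add: mult_pos_neg)
        ultimately show ?case
          using wk by linarith
      qed
    next
      case greater
      then have "w$k < hi$k"
        using assms(2) unfolding inward_def by simp
      show ?thesis
        using ev eventually_at_right_less eventually_at_right_0_less[OF \<open>w$k < hi$k\<close>, of "v$k"]
      proof eventually_elim
        case (elim \<eta>)
        moreover have "0 < \<eta> * v$k"
          using elim greater by simp
        ultimately show ?case
          using wk by linarith
      qed
    qed (use flat in simp)
  qed
  show ?thesis
    unfolding mem_box_cart by (rule eventually_all_finite) (use comp in simp)
qed

lemma convex_frequently_ray_imp_eventually: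
  fixes w v :: "'a::real_vector"
  assumes C: "convex C" and fr: "\<exists>\<^sub>F \<eta> in at_right 0. w + \<eta> *\<^sub>R v \<in> C"
  shows "\<forall>\<^sub>F \<eta> in at_right 0. w + \<eta> *\<^sub>R v \<in> C"
proof -
  define A where "A = {\<eta>. w + \<eta> *\<^sub>R v \<in> C}"
  have "convex A"
  proof (rule convexI)
    fix x y u u' :: real
    assume "x \<in> A" "y \<in> A" "0 \<le> u" "0 \<le> u'" "u + u' = 1"
    moreover have "u *\<^sub>R (w + x *\<^sub>R v) + u' *\<^sub>R (w + y *\<^sub>R v) = (u + u') *\<^sub>R w + (u * x + u' * y) *\<^sub>R v"
      by (simp add: scaleR_add_right scaleR_add_left)
    ultimately show "u *\<^sub>R x + u' *\<^sub>R y \<in> A"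
      using convexD[OF C, of "w + x *\<^sub>R v" "w + y *\<^sub>R v" u u'] unfolding A_def by simp
  qed
  then have "is_interval A"
    using is_interval_convex_1 by blast
  then have interval: "y \<in> A" if "a \<in> A" "b \<in> A" "a \<le> y" "y \<le> b" for a b y
    using that unfolding is_interval_1 by blast
  obtain b where b: "0 < b" "b \<in> A"
    using frequently_ex[OF frequently_eventually_frequently[OF fr eventually_at_right_less]]
    unfolding A_def by blast
  show ?thesis
    unfolding eventually_at_right_field
  proof (intro exI[of _ b] conjI allI impI)
    show "0 < b"
      by (fact b(1))
  next
    fix y :: real
    assume y: "0 < y" "y < b"
    have "\<forall>\<^sub>F \<eta> in at_right 0. 0 < \<eta> \<and> \<eta> < y"
      using eventually_at_right_less eventually_at_right_0_less[OF y(1), of 1]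
      by eventually_elim simp
    from frequently_ex[OF frequently_eventually_frequently[OF fr this]]
    obtain a where "w + a *\<^sub>R v \<in> C" "a \<le> y"
      by (auto simp: less_imp_le)
    then show "w + y *\<^sub>R v \<in> C"
      using interval[OF _ b(2), of a y] y unfolding A_def by simp
  qed
qed

lemma eventually_ray_in_eset_imp:
  assumes "\<forall>\<^sub>F \<eta> in at_right 0. w + \<eta> *\<^sub>R v \<in> eset E"
  shows "w \<in> ebox E \<and> inward (lo_corner E) (hi_corner E) w v"
  using assms eset_subset_ebox[of E] unfolding ebox_def eventually_ray_in_cbox_iff[symmetric]
  by (auto elim: eventually_mono)

lemma eventually_ray_in_eset_nth:
  assumes "\<forall>\<^sub>F \<eta> in at_right 0. w + \<eta> *\<^sub>R v \<in> eset E" "v$k = 0"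
  shows "w$k \<in> cset (E k)"
  using eventually_happens[OF assms(1)] assms(2) by (auto simp: mem_eset dest: spec[of _ k])

lemma eventually_ray_in_eset_is_iv:
  assumes "\<forall>\<^sub>F \<eta> in at_right 0. w + \<eta> *\<^sub>R v \<in> eset E" "v$k \<noteq> 0"
  shows "is_iv (E k)"
proof (rule ccontr)
  assume "\<not> is_iv (E k)"
  then have Ek: "cset (E k) = {real_of_int (clo (E k))}"
    by (cases "E k") auto
  have "\<forall>\<^sub>F \<eta> in at_right 0. w$k + \<eta> * v$k = real_of_int (clo (E k))"
    using assms(1)
  proof (rule eventually_mono)
    fix \<eta>
    assume "w + \<eta> *\<^sub>R v \<in> eset E"
    then have "(w + \<eta> *\<^sub>R v)$k \<in> cset (E k)"
      by (simp add: mem_eset)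
    then show "w$k + \<eta> * v$k = real_of_int (clo (E k))"
      using Ek by simp
  qed
  then obtain b where b: "0 < b"
    and const: "\<And>\<eta>. 0 < \<eta> \<Longrightarrow> \<eta> < b \<Longrightarrow> w$k + \<eta> * v$k = real_of_int (clo (E k))"
    unfolding eventually_at_right_field by auto
  have "w$k + (b/2) * v$k = real_of_int (clo (E k))" "w$k + (b/4) * v$k = real_of_int (clo (E k))"
    using const[of "b/2"] const[of "b/4"] b by simp_all
  then have "b * v$k = 0"
    by linarith
  then show False
    using \<open>0 < b\<close> assms(2) by simp
qed

lemma cOmega_eq_cbox: "cOmega N = cbox 0 (\<chi> k. real (N k))"
  unfolding cOmega_def by (auto simp: mem_box_cart)

lemma (in box_complex) eventually_ray_in_entity:
  assumes "\<forall>\<^sub>F \<eta> in at_right 0. w + \<eta> *\<^sub>R v \<in> cOmega N"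
  obtains E where "E \<in> M" "\<forall>\<^sub>F \<eta> in at_right 0. w + \<eta> *\<^sub>R v \<in> eset E"
proof -
  have "\<forall>\<^sub>F \<eta> in at_right 0. \<exists>E\<in>M. w + \<eta> *\<^sub>R v \<in> eset E"
    using assms by eventually_elim (rule covers)
  then have "\<exists>\<^sub>F \<eta> in at_right 0. \<exists>E\<in>M. w + \<eta> *\<^sub>R v \<in> eset E"
    by (simp add: eventually_frequently)
  then obtain E where "E \<in> M" "\<exists>\<^sub>F \<eta> in at_right 0. w + \<eta> *\<^sub>R v \<in> eset E"
    using frequently_bex_finite[OF finite_mesh, of "\<lambda>\<eta> E. w + \<eta> *\<^sub>R v \<in> eset E"] by blast
  then show ?thesis
    using that convex_frequently_ray_imp_eventually[OF convex_eset] by blast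
qed

section \<open>Cells around a hyperplane\<close>

lemma within_closure_is_iv: "wf_comp Nk c \<Longrightarrow> is_iv c \<Longrightarrow> within_closure c c' \<Longrightarrow> is_iv c'"
  unfolding wf_comp_def within_closure_def by (cases c') auto

lemma within_closure_common_point:
  assumes "wf_comp Nk c" "is_iv c" "within_closure c c1" "within_closure c c2"
  shows "cset c1 \<inter> cset c2 \<noteq> {}"
proof -
  have "(real_of_int (clo c) + real_of_int (chi c)) / 2 \<in> cset c'" if "within_closure c c'" for c'
    using that assms(1,2) within_closure_is_iv[OF assms(1,2) that]
    unfolding wf_comp_def within_closure_def mem_cset_iff by simp
  then show ?thesis
    using assms(3,4) by blast
qed

lemma cset_overlap_same_endpoint:
  assumes "wf_comp Nk c" "wf_comp Nk' c'" "is_iv c" "is_iv c'"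
    and "t \<in> {clo c, chi c}" "t \<in> {clo c', chi c'}" "(clo c = t) = (clo c' = t)"
  shows "cset c \<inter> cset c' \<noteq> {}"
proof (cases "clo c = t")
  case True
  then have "real_of_int t + 1/2 \<in> cset c \<inter> cset c'"
    using assms by (auto simp: wf_comp_def mem_cset_iff)
  then show ?thesis
    by blast
next
  case False
  then have "real_of_int t - 1/2 \<in> cset c \<inter> cset c'"
    using assms by (auto simp: wf_comp_def mem_cset_iff)
  then show ?thesis
    by blast
qed

definition ridge_at :: "'d ent \<Rightarrow> 'd \<Rightarrow> int \<Rightarrow> 'd \<Rightarrow> int \<Rightarrow> bool" where
  "ridge_at T i n j t \<longleftrightarrow> i \<noteq> j \<and> T i = Pt n \<and> T j = Pt t \<and> (\<forall>k. k \<noteq> i \<longrightarrow> k \<noteq> j \<longrightarrow> is_iv (T k))"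

definition cell_at_plane :: "'d::finite ent set \<Rightarrow> 'd \<Rightarrow> int \<Rightarrow> 'd ent \<Rightarrow> bool" where
  "cell_at_plane M i n Q \<longleftrightarrow> Q \<in> M \<and> is_cell Q \<and> (clo (Q i) = n \<or> chi (Q i) = n)"

lemma wf_eset_subset_cOmega:
  assumes "\<And>k. wf_comp (N k) (E k)"
  shows "eset E \<subseteq> cOmega N"
proof
  fix z
  assume "z \<in> eset E"
  then have "real_of_int (clo (E k)) \<le> z$k \<and> z$k \<le> real_of_int (chi (E k))" for k
    using cset_bounds unfolding mem_eset by blast
  moreover have "0 \<le> clo (E k)" "chi (E k) \<le> int (N k)" for k
    using assms[of k] unfolding wf_comp_def by auto
  ultimately show "z \<in> cOmega N"
    unfolding cOmega_def by (smt (verit) mem_Collect_eq of_int_le_iff of_int_of_nat_eq of_int_0_le_iff)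
qed

context box_complex
begin

lemma closure_eset_mesh: "E \<in> M \<Longrightarrow> closure (eset E) = ebox E"
  using closure_eset wf by blast

lemma eset_subset_cOmega: "E \<in> M \<Longrightarrow> eset E \<subseteq> cOmega N"
  using wf_eset_subset_cOmega wf by blast

lemma Sk_on_plane:
  assumes "z$i = real_of_int n"
  shows "z \<in> Sk M i \<longleftrightarrow> (\<exists>Q. cell_at_plane M i n Q \<and> z \<in> ebox Q)"
  using assms closure_eset_mesh unfolding Sk_def cell_at_plane_def by fastforce

lemma within_closure_of_point:
  "E \<in> M \<Longrightarrow> E' \<in> M \<Longrightarrow> z \<in> eset E \<Longrightarrow> z \<in> ebox E' \<Longrightarrow> within_closure (E k) (E' k)"
  using meets_closure_imp_within meets_closure_of_point by blast

lemma cell_at_plane_above_facet: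
  assumes E: "E \<in> M" "E i = Pt n" "\<And>k. k \<noteq> i \<Longrightarrow> is_iv (E k)" and N: "1 \<le> N i"
  obtains Q where "cell_at_plane M i n Q" "\<And>k. within_closure (E k) (Q k)"
proof -
  define e where "e = center E"
  have e: "e \<in> eset E"
    unfolding e_def using center_in_eset wf[OF E(1)] by blast
  have ei: "e$i = real_of_int n"
    using e E(2) unfolding mem_eset by (metis cset.simps(1) singletonD)
  have n: "0 \<le> n" "n \<le> int (N i)"
    using E(2) wf[OF E(1), of i] unfolding wf_comp_def by auto
  define v :: "real^'d" where "v = (\<chi> k. if k \<noteq> i then 0 else if n < int (N i) then 1 else -1)"
  have "\<forall>\<^sub>F \<eta> in at_right 0. e + \<eta> *\<^sub>R v \<in> cOmega N"
    unfolding cOmega_eq_cbox eventually_ray_in_cbox_iff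
    using e eset_subset_cOmega[OF E(1)] ei n N
    by (auto simp: cOmega_eq_cbox inward_def v_def)
  then obtain Q where Q: "Q \<in> M" and ray: "\<forall>\<^sub>F \<eta> in at_right 0. e + \<eta> *\<^sub>R v \<in> eset Q"
    using eventually_ray_in_entity by blast
  have eQ: "e \<in> ebox Q"
    using eventually_ray_in_eset_imp[OF ray] by simp
  have within: "within_closure (E k) (Q k)" for k
    using within_closure_of_point[OF E(1) Q e eQ] .
  have "is_iv (Q k)" for k
  proof (cases "k = i")
    case True
    then show ?thesis
      using eventually_ray_in_eset_is_iv[OF ray] by (simp add: v_def)
  next
    case False
    then show ?thesis
      using within_closure_is_iv[OF wf[OF E(1)] E(3) within] by simp
  qed
  then have cell: "is_cell Q"
    unfolding is_cell_def by simp
  have "clo (Q i) = n \<or> chi (Q i) = n"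
  proof (rule ccontr)
    assume "\<not> ?thesis"
    then have "clo (Q i) < n" "n < chi (Q i)"
      using within[of i] E(2) unfolding within_closure_def by auto
    then have "real_of_int n \<in> cset (E i) \<inter> cset (Q i)"
      using \<open>is_iv (Q i)\<close> E(2) by (simp add: mem_cset_iff)
    moreover have "e$k \<in> cset (E k) \<inter> cset (Q k)" if "k \<noteq> i" for k
      using e eventually_ray_in_eset_nth[OF ray, of k] that by (simp add: v_def mem_eset)
    ultimately have "cset (E k) \<inter> cset (Q k) \<noteq> {}" for k
      by (cases "k = i") auto
    then have "E = Q"
      using disjoint[OF E(1) Q] by blast
    then show False
      using E(2) \<open>is_iv (Q i)\<close> by simp
  qed
  then show ?thesis
    using that Q cell within unfolding cell_at_plane_def by blast
qed

lemma eq_if_overlap_except_two: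
  assumes "T \<in> M" "\<And>k. k \<noteq> i \<Longrightarrow> k \<noteq> j \<Longrightarrow> is_iv (T k)"
    and "E \<in> M" "E' \<in> M"
    and "\<And>k. k \<noteq> i \<Longrightarrow> k \<noteq> j \<Longrightarrow> within_closure (T k) (E k) \<and> within_closure (T k) (E' k)"
    and "cset (E i) \<inter> cset (E' i) \<noteq> {}" "cset (E j) \<inter> cset (E' j) \<noteq> {}"
  shows "E = E'"
proof (rule disjoint[OF assms(3,4)])
  fix k
  show "cset (E k) \<inter> cset (E' k) \<noteq> {}"
    using assms within_closure_common_point[OF wf[OF assms(1)]] by metis
qed

lemma facet_endpoint:
  assumes "T \<in> M" "ridge_at T i n j t"
    and F: "F \<in> M" "\<And>k. within_closure (T k) (F k)" "F i = Pt n" "is_iv (F j)"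
  shows "t \<in> {clo (F j), chi (F j)}"
proof (rule ccontr)
  assume "t \<notin> {clo (F j), chi (F j)}"
  then have "real_of_int t \<in> cset (F j)"
    using F(2)[of j] F(4) assms(2) unfolding within_closure_def mem_cset_iff ridge_at_def by auto
  moreover have "within_closure (T k) (T k)" for k
    unfolding within_closure_def by simp
  ultimately show False
    using eq_if_overlap_except_two[OF assms(1) _ F(1) assms(1), of i j] F assms(2)
    unfolding ridge_at_def by auto
qed
lemma facet_around_ridge:
  assumes T: "T \<in> M" "ridge_at T i n j t"
    and F: "F \<in> M" "edim F = CARD('d) - 1" "eset T \<subseteq> frontier (eset F)"
  shows "(\<forall>k. within_closure (T k) (F k)) \<and> (\<forall>k. k \<noteq> i \<longrightarrow> k \<noteq> j \<longrightarrow> is_iv (F k)) \<and>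
    (F i = Pt n \<and> is_iv (F j) \<and> t \<in> {clo (F j), chi (F j)} \<or>
     F j = Pt t \<and> is_iv (F i) \<and> n \<in> {clo (F i), chi (F i)})"
proof -
  have "center T \<in> eset T"
    using center_in_eset wf[OF T(1)] by blast
  moreover have "eset T \<subseteq> ebox F"
    using F(3) closure_eset_mesh[OF F(1)] unfolding frontier_def by auto
  ultimately have within: "within_closure (T k) (F k)" for k
    using within_closure_of_point[OF T(1) F(1)] by blast
  have "card {k. \<not> is_iv (F k)} = CARD('d) - card {k. is_iv (F k)}"
    using card_Diff_subset[of "{k. is_iv (F k)}" UNIV] by (simp add: set_diff_eq)
  then have "card {k. \<not> is_iv (F k)} = 1"
    using F(2) unfolding edim_def by simp
  then obtain k0 where k0: "{k. \<not> is_iv (F k)} = {k0}"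
    by (rule card_1_singletonE)
  have "k0 = i \<or> k0 = j"
    using within_closure_is_iv[OF wf[OF T(1)] _ within, of k0] k0 T(2) unfolding ridge_at_def by blast
  moreover have ridge_sym: "ridge_at T j t i n"
    using T(2) unfolding ridge_at_def by auto
  moreover have "F k0 = Pt (clo (F k0))"
    using k0 not_is_iv_iff by blast
  then have "F k0 = T k0"
    using within[of k0] \<open>k0 = i \<or> k0 = j\<close> T(2) unfolding ridge_at_def within_closure_def
    by (metis chi.simps(1) clo.simps(1) order_antisym)
  moreover have ivF: "is_iv (F k)" if "k \<noteq> k0" for k
    using k0 that by blast
  ultimately show ?thesis
    using within T(2) facet_endpoint[OF T F(1) within] facet_endpoint[OF T(1) ridge_sym F(1) within]
    unfolding ridge_at_def by (cases "k0 = i") auto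
qed

lemma card_facets_around_ridge:
  assumes T: "T \<in> M" "ridge_at T i n j t"
    and Q: "Q \<in> M" "is_cell Q" "\<And>k. within_closure (T k) (Q k)"
      "clo (Q i) < n" "n < chi (Q i)" "t \<in> {clo (Q j), chi (Q j)}"
  shows "card {F \<in> M. edim F = CARD('d) - 1 \<and> eset T \<subseteq> frontier (eset F)} < 4"
proof -
  define S where "S = {F \<in> M. edim F = CARD('d) - 1 \<and> eset T \<subseteq> frontier (eset F)}"
  have shape: "F \<in> M \<and> (\<forall>k. within_closure (T k) (F k)) \<and>
      (F i = Pt n \<and> is_iv (F j) \<and> t \<in> {clo (F j), chi (F j)} \<or>
       F j = Pt t \<and> is_iv (F i) \<and> n \<in> {clo (F i), chi (F i)})" if "F \<in> S" for F
    using that facet_around_ridge[OF T] unfolding S_def by blast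
  have flat_i: "F i = Pt n \<and> t \<in> {clo (F j), chi (F j)}" if "F \<in> S" "is_iv (F j)" for F
    using shape[OF that(1)] that(2) by auto
  have flat_j: "F j = Pt t \<and> is_iv (F i) \<and> n \<in> {clo (F i), chi (F i)}" if "F \<in> S" "\<not> is_iv (F j)" for F
    using shape[OF that(1)] that(2) by auto
  have T_iv: "\<And>k. k \<noteq> i \<Longrightarrow> k \<noteq> j \<Longrightarrow> is_iv (T k)"
    using T(2) unfolding ridge_at_def by blast
  text \<open>A facet around the ridge is determined by the direction in which it is flat and the side
    of the ridge on which it lies.\<close>
  define side where "side F = (is_iv (F j), if is_iv (F j) then clo (F j) = t else clo (F i) = n)"
    for F :: "'d ent"
  define bad where "bad = (True, clo (Q j) = t)"
  have inj: "inj_on side S"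
  proof (rule inj_onI)
    fix F F'
    assume F: "F \<in> S" "F' \<in> S" "side F = side F'"
    have M: "F \<in> M" "F' \<in> M"
      using F(1,2) unfolding S_def by auto
    have overlap: "cset (F k) \<inter> cset (F' k) \<noteq> {}" if "k = i \<or> k = j" for k
    proof (cases "is_iv (F j)")
      case True
      moreover have iv': "is_iv (F' j)" and "(clo (F j) = t) = (clo (F' j) = t)"
        using F(3) True unfolding side_def by auto
      ultimately have Fi: "F i = Pt n" "F' i = Pt n" and endpoints:
        "t \<in> {clo (F j), chi (F j)}" "t \<in> {clo (F' j), chi (F' j)}" "(clo (F j) = t) = (clo (F' j) = t)"
        using flat_i[OF F(1) True] flat_i[OF F(2) iv'] by auto
      have "cset (F j) \<inter> cset (F' j) \<noteq> {}"
        by (rule cset_overlap_same_endpoint[OF wf[OF M(1)] wf[OF M(2)] True iv' endpoints])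
      with that Fi show ?thesis
        by (elim disjE) simp_all
    next
      case False
      moreover have iv': "\<not> is_iv (F' j)" and "(clo (F i) = n) = (clo (F' i) = n)"
        using F(3) False unfolding side_def by auto
      ultimately have Fj: "F j = Pt t" "F' j = Pt t" and iv: "is_iv (F i)" "is_iv (F' i)" and endpoints:
        "n \<in> {clo (F i), chi (F i)}" "n \<in> {clo (F' i), chi (F' i)}" "(clo (F i) = n) = (clo (F' i) = n)"
        using flat_j[OF F(1) False] flat_j[OF F(2) iv'] by auto
      have "cset (F i) \<inter> cset (F' i) \<noteq> {}"
        by (rule cset_overlap_same_endpoint[OF wf[OF M(1)] wf[OF M(2)] iv endpoints])
      with that Fj show ?thesis
        by (elim disjE) simp_all
    qed
    have "within_closure (T k) (F k) \<and> within_closure (T k) (F' k)" for k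
      using shape[OF F(1)] shape[OF F(2)] by blast
    then show "F = F'"
      using eq_if_overlap_except_two[OF T(1) T_iv M _ overlap overlap] by blast
  qed
  have "side F \<noteq> bad" if "F \<in> S" for F
  proof
    assume side: "side F = bad"
    then have ivj: "is_iv (F j)"
      unfolding side_def bad_def by simp
    then have same: "(clo (F j) = t) = (clo (Q j) = t)"
      using side unfolding side_def bad_def by simp
    have F: "F \<in> M" "F i = Pt n" "t \<in> {clo (F j), chi (F j)}"
      using that flat_i[OF that ivj] unfolding S_def by auto
    have "cset (F j) \<inter> cset (Q j) \<noteq> {}"
      using cset_overlap_same_endpoint[OF wf[OF F(1)] wf[OF Q(1)] ivj _ F(3) Q(6) same] Q(2)
      unfolding is_cell_def by blast
    moreover have "cset (F i) \<inter> cset (Q i) \<noteq> {}"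
      using F(2) Q(2,4,5) unfolding is_cell_def by (auto simp: mem_cset_iff)
    moreover have "within_closure (T k) (F k)" for k
      using shape[OF that] by blast
    ultimately have "F = Q"
      using eq_if_overlap_except_two[OF T(1) T_iv F(1) Q(1)] Q(3) by blast
    then show False
      using F(2) Q(2) unfolding is_cell_def by (metis is_iv.simps(1))
  qed
  then have "side ` S \<subseteq> UNIV - {bad}"
    by blast
  then have "card (side ` S) \<le> card (UNIV - {bad})"
    by (intro card_mono) simp_all
  also have "\<dots> = 3"
    unfolding bad_def
    by (simp add: card_Diff_singleton UNIV_Times_UNIV[symmetric] card_cartesian_product
        del: UNIV_Times_UNIV)
  finally show ?thesis
    using card_image[OF inj] unfolding S_def by simp
qed

end

lemma inward_mono:
  assumes "inward lo hi w v" "\<And>k. (0 < v'$k \<longrightarrow> 0 < v$k) \<and> (v'$k < 0 \<longrightarrow> v$k < 0)"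
  shows "inward lo hi w v'"
  using assms unfolding inward_def by blast

lemma inward_combine:
  assumes "inward lo hi w u" "inward lo hi w v"
    and "\<And>k. (0 < x$k \<longrightarrow> 0 < u$k \<or> 0 < v$k) \<and> (x$k < 0 \<longrightarrow> u$k < 0 \<or> v$k < 0)"
  shows "inward lo hi w x"
  unfolding inward_def
proof (intro allI conjI impI)
  fix k
  have u: "0 < u$k \<Longrightarrow> w$k < hi$k" "u$k < 0 \<Longrightarrow> lo$k < w$k"
    and v: "0 < v$k \<Longrightarrow> w$k < hi$k" "v$k < 0 \<Longrightarrow> lo$k < w$k"
    using assms(1,2) unfolding inward_def by blast+
  show "0 < x$k \<Longrightarrow> w$k < hi$k" "x$k < 0 \<Longrightarrow> lo$k < w$k"
    using assms(3)[of k] u v by blast+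
qed

lemma single_flip_between:
  fixes \<rho> \<tau> :: "'a^'d::finite"
  assumes "\<not> P \<rho>" "P \<tau>"
  obtains \<rho>' j where "\<not> P \<rho>'" "P (\<chi> l. if l = j then \<tau>$j else \<rho>'$l)" "\<rho>'$j \<noteq> \<tau>$j" "\<rho>'$j = \<rho>$j"
    "\<And>l. \<rho>'$l = \<rho>$l \<or> \<rho>'$l = \<tau>$l"
  using assms(1)
proof (induction "card {k. \<rho>$k \<noteq> \<tau>$k}" arbitrary: \<rho> rule: less_induct)
  case less
  have "\<rho> \<noteq> \<tau>"
    using less.prems(2) assms(2) by blast
  then obtain k where k: "\<rho>$k \<noteq> \<tau>$k"
    by (auto simp: vec_eq_iff)
  define \<rho>' where "\<rho>' = (\<chi> l. if l = k then \<tau>$k else \<rho>$l)"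
  show ?case
  proof (cases "P \<rho>'")
    case True
    show ?thesis
      by (rule less.prems(1)[of \<rho> k]) (use True k less.prems(2) in \<open>simp_all add: \<rho>'_def\<close>)
  next
    case False
    have "{l. \<rho>'$l \<noteq> \<tau>$l} \<subset> {l. \<rho>$l \<noteq> \<tau>$l}"
      unfolding \<rho>'_def using k by auto
    then have "card {l. \<rho>'$l \<noteq> \<tau>$l} < card {l. \<rho>$l \<noteq> \<tau>$l}"
      by (rule psubset_card_mono[OF finite])
    then show ?thesis
    proof (rule less.hyps[OF _ _ False])
      fix \<rho>1 j
      assume \<rho>1: "\<not> P \<rho>1" "P (\<chi> l. if l = j then \<tau>$j else \<rho>1$l)" "\<rho>1$j \<noteq> \<tau>$j" "\<rho>1$j = \<rho>'$j"
        "\<And>l. \<rho>1$l = \<rho>'$l \<or> \<rho>1$l = \<tau>$l"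
      have "j \<noteq> k"
        using \<rho>1(3,4) unfolding \<rho>'_def by (cases "j = k") simp_all
      then have "\<rho>1$j = \<rho>$j"
        using \<rho>1(4) unfolding \<rho>'_def by simp
      moreover have "\<rho>1$l = \<rho>$l \<or> \<rho>1$l = \<tau>$l" for l
        using \<rho>1(5)[of l] unfolding \<rho>'_def by (cases "l = k") simp_all
      ultimately show thesis
        by (rule less.prems(1)[OF \<rho>1(1-3)])
    qed
  qed
qed

lemma within_closure_endpoint:
  assumes "within_closure c c'" "real_of_int m \<in> cset c" "m \<in> {clo c', chi c'}"
  shows "c = Pt m"
  using assms unfolding within_closure_def by (cases c) auto

lemma eventually_leave_endpoint:
  fixes a b x s :: real
  assumes "x = a \<and> 0 < s \<or> x = b \<and> s < 0" "a < b"
  shows "\<forall>\<^sub>F \<epsilon> in at_right 0. a < x + \<epsilon> * s \<and> x + \<epsilon> * s < b"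
  using assms(1)
proof
  assume h: "x = a \<and> 0 < s"
  show ?thesis
    using eventually_at_right_less eventually_at_right_0_less[OF assms(2), of s]
    by eventually_elim (use h in simp)
next
  assume h: "x = b \<and> s < 0"
  show ?thesis
    using eventually_at_right_less eventually_at_right_0_greater[OF assms(2), of s]
    by eventually_elim (use h in \<open>simp add: mult_pos_neg\<close>)
qed

definition into_plane_cell :: "'d::finite ent set \<Rightarrow> 'd \<Rightarrow> int \<Rightarrow> real^'d \<Rightarrow> real^'d \<Rightarrow> bool" where
  "into_plane_cell M i n w v \<longleftrightarrow>
     (\<exists>Q. cell_at_plane M i n Q \<and> w \<in> ebox Q \<and> inward (lo_corner Q) (hi_corner Q) w v)"

context box_complex
begin

lemma into_plane_cell_imp_Sk:
  assumes "into_plane_cell M i n w v" "w$i = real_of_int n" "v$i = 0"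
  shows "\<forall>\<^sub>F \<eta> in at_right 0. w + \<eta> *\<^sub>R v \<in> Sk M i"
proof -
  obtain Q where Q: "cell_at_plane M i n Q" "w \<in> ebox Q" "inward (lo_corner Q) (hi_corner Q) w v"
    using assms(1) unfolding into_plane_cell_def by blast
  then have "\<forall>\<^sub>F \<eta> in at_right 0. w + \<eta> *\<^sub>R v \<in> ebox Q"
    unfolding ebox_def eventually_ray_in_cbox_iff by blast
  then show ?thesis
  proof eventually_elim
    case (elim \<eta>)
    moreover have "(w + \<eta> *\<^sub>R v)$i = real_of_int n"
      using assms(2,3) by simp
    ultimately show ?case
      using Sk_on_plane Q(1) by blast
  qed
qed

lemma crossing_cell:
  assumes N: "1 \<le> N i" and w: "w$i = real_of_int n"
    and \<rho>: "\<rho>$i = 0" "\<And>k. k \<noteq> i \<Longrightarrow> \<rho>$k \<noteq> 0" "\<forall>\<^sub>F \<eta> in at_right 0. w + \<eta> *\<^sub>R \<rho> \<in> cOmega N"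
    and not_into: "\<not> into_plane_cell M i n w \<rho>"
  obtains Q where "Q \<in> M" "is_cell Q" "clo (Q i) < n" "n < chi (Q i)"
    "\<forall>\<^sub>F \<eta> in at_right 0. w + \<eta> *\<^sub>R \<rho> \<in> eset Q"
proof -
  obtain Q where Q: "Q \<in> M" and ray: "\<forall>\<^sub>F \<eta> in at_right 0. w + \<eta> *\<^sub>R \<rho> \<in> eset Q"
    using eventually_ray_in_entity[OF \<rho>(3)] by blast
  have Qk: "is_iv (Q k)" if "k \<noteq> i" for k
    using eventually_ray_in_eset_is_iv[OF ray] \<rho>(2) that by blast
  have nQ: "real_of_int n \<in> cset (Q i)"
    using eventually_ray_in_eset_nth[OF ray \<rho>(1)] w by simp
  have "is_iv (Q i)"
  proof (rule ccontr)
    assume "\<not> is_iv (Q i)"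
    then have "Q i = Pt n"
      using nQ by (cases "Q i") auto
    then obtain Q' where Q': "cell_at_plane M i n Q'" "\<And>k. within_closure (Q k) (Q' k)"
      using cell_at_plane_above_facet[OF Q _ Qk N] by blast
    have "eset Q \<subseteq> ebox Q'"
      using eset_subset_ebox[of Q] ebox_mono[of Q Q'] Q'(2) by blast
    then have "\<forall>\<^sub>F \<eta> in at_right 0. w + \<eta> *\<^sub>R \<rho> \<in> ebox Q'"
      using ray by (auto elim: eventually_mono)
    then have "into_plane_cell M i n w \<rho>"
      using Q'(1) unfolding into_plane_cell_def ebox_def eventually_ray_in_cbox_iff by blast
    then show False
      using not_into by simp
  qed
  then have "is_cell Q"
    using Qk unfolding is_cell_def by metis
  moreover have "clo (Q i) < n" "n < chi (Q i)"
    using nQ \<open>is_iv (Q i)\<close> by (auto simp: mem_cset_iff)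
  ultimately show ?thesis
    using that Q ray by blast
qed

lemma ebox_subset_cOmega: "E \<in> M \<Longrightarrow> ebox E \<subseteq> cOmega N"
  using closure_eset_mesh eset_subset_cOmega closure_minimal[of "eset E" "cOmega N"]
  unfolding cOmega_eq_cbox by (metis closed_cbox)

lemma tjunctionI:
  assumes d: "2 \<le> CARD('d)"
    and T: "T \<in> M" "ridge_at T i n j t" "y \<in> eset T" "y \<in> Omega N"
    and Q: "Q \<in> M" "is_cell Q" "\<And>k. within_closure (T k) (Q k)"
      "clo (Q i) < n" "n < chi (Q i)" "t \<in> {clo (Q j), chi (Q j)}"
  shows "tjunction N M T" "ascell_rel M T Q i j"
proof -
  have T_ij: "i \<noteq> j" "T i = Pt n" "T j = Pt t" "\<And>k. k \<noteq> i \<Longrightarrow> k \<noteq> j \<Longrightarrow> is_iv (T k)"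
    using T(2) unfolding ridge_at_def by auto
  then have "{k. is_iv (T k)} = UNIV - {i, j}"
    by auto
  then have "edim T = CARD('d) - 2"
    unfolding edim_def using T_ij(1) by (simp add: card_Diff_subset)
  moreover have "Omega N = box 0 (\<chi> k. real (N k))"
    unfolding Omega_def by (auto simp: mem_box_cart)
  then have "open (Omega N)"
    by (simp add: open_box)
  then have "\<not> eset T \<subseteq> frontier (Omega N)"
    using T(3,4) unfolding frontier_def by (auto simp: interior_open)
  ultimately show "tjunction N M T"
    unfolding tjunction_def using T(1) card_facets_around_ridge[OF T(1,2) Q] by simp
  have "eset T \<subseteq> frontier (eset Q)"
  proof
    fix z
    assume z: "z \<in> eset T"
    have "z \<in> closure (eset Q)"
      using z eset_subset_ebox[of T] ebox_mono[of T Q] Q(3) closure_eset_mesh[OF Q(1)] by blast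
    moreover have "z$j = real_of_int t"
      using z T_ij(3) unfolding mem_eset by (metis cset.simps(1) singletonD)
    then have "z$j \<notin> cset (Q j)"
      using Q(2,6) unfolding is_cell_def by (auto simp: mem_cset_iff)
    then have "z \<notin> eset Q"
      unfolding mem_eset by blast
    ultimately show "z \<in> frontier (eset Q)"
      unfolding frontier_def eset_cell_eq_box[OF Q(2)] by (simp add: interior_open open_box)
  qed
  moreover have "real_of_int n \<in> cset (Q i)"
    using Q(2,4,5) unfolding is_cell_def by (simp add: mem_cset_iff)
  ultimately show "ascell_rel M T Q i j"
    unfolding ascell_rel_def using T_ij Q by auto
qed

lemma eset_nth_in_Omega:
  assumes "E \<in> M" "z \<in> eset E" "is_iv (E k)"
  shows "0 < z$k \<and> z$k < real (N k)"
proof -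
  have "real_of_int (clo (E k)) < z$k" "z$k < real_of_int (chi (E k))"
    using assms(2,3) unfolding mem_eset by (auto simp: mem_cset_iff dest!: spec[of _ k])
  moreover have "0 \<le> clo (E k)" "chi (E k) \<le> int (N k)"
    using wf[OF assms(1), of k] unfolding wf_comp_def by auto
  ultimately show ?thesis
    by linarith
qed

text \<open>Leaving the plane cell \<open>Q3\<close> along \<open>\<sigma>\<close> keeps the ray out of the open cell \<open>Q\<close>, which is
  not bounded by the plane; hence \<open>w\<close> must lie on a \<open>j\<close>-facet of \<open>Q\<close>.\<close>

lemma crossing_on_facet:
  assumes w: "w$i = real_of_int n"
    and Q: "is_cell Q" "Q \<in> M" "clo (Q i) < n" "n < chi (Q i)" "w \<in> ebox Q"
      "inward (lo_corner Q) (hi_corner Q) w \<sigma>"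
    and Q3: "cell_at_plane M i n Q3" "w \<in> ebox Q3" "inward (lo_corner Q3) (hi_corner Q3) w \<sigma>"
    and \<sigma>: "\<And>k. \<sigma>$k = 0 \<Longrightarrow> k = i \<or> k = j"
  shows "w$j = real_of_int (clo (Q j)) \<or> w$j = real_of_int (chi (Q j))"
proof (rule ccontr)
  assume "\<not> ?thesis"
  then have "lo_corner Q $ k < w$k \<and> w$k < hi_corner Q $ k" if "\<sigma>$k = 0" for k
    using \<sigma>[OF that] Q(3,4,5) w unfolding mem_ebox lo_corner_def hi_corner_def
    by (auto simp: order.order_iff_strict)
  then have "\<forall>\<^sub>F \<eta> in at_right 0. w + \<eta> *\<^sub>R \<sigma> \<in> eset Q"
    using eventually_ray_in_box[of w "lo_corner Q" "hi_corner Q" \<sigma>] Q(5,6)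
    unfolding eset_cell_eq_box[OF Q(1)] ebox_def by blast
  moreover have "\<forall>\<^sub>F \<eta> in at_right 0. w + \<eta> *\<^sub>R \<sigma> \<in> ebox Q3"
    using Q3(2,3) unfolding ebox_def eventually_ray_in_cbox_iff by blast
  ultimately obtain z where "z \<in> eset Q" "z \<in> ebox Q3"
    using eventually_happens[OF eventually_conj] by fastforce
  then have "within_closure (Q i) (Q3 i)"
    using within_closure_of_point[OF Q(2)] Q3(1) unfolding cell_at_plane_def by blast
  then show False
    using Q(3,4) Q3(1) unfolding within_closure_def cell_at_plane_def by auto
qed

lemma tjunction_at_crossing:
  assumes d: "2 \<le> CARD('d)" and w: "w$i = real_of_int n" and ij: "j \<noteq> i"
    and \<rho>: "\<rho>$i = 0" "\<And>k. k \<noteq> i \<Longrightarrow> \<rho>$k \<noteq> 0"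
    and Q: "Q \<in> M" "is_cell Q" "clo (Q i) < n" "n < chi (Q i)" "w \<in> ebox Q"
      "inward (lo_corner Q) (hi_corner Q) w \<rho>"
    and Q3: "cell_at_plane M i n Q3" "w \<in> ebox Q3"
      "inward (lo_corner Q3) (hi_corner Q3) w (\<chi> l. if l = j then - \<rho>$j else \<rho>$l)"
  obtains T where "tjunction N M T" "ascell_rel M T Q i j" "w \<in> closure (eset T)"
    "w$j = real_of_int (if 0 < \<rho>$j then clo (Q j) else chi (Q j))"
proof -
  define \<sigma> :: "real^'d" where "\<sigma> = (\<chi> l. if l = j then 0 else \<rho>$l)"
  have Q3M: "Q3 \<in> M" "clo (Q3 i) = n \<or> chi (Q3 i) = n"
    using Q3(1) unfolding cell_at_plane_def by auto
  have \<sigma>Q: "inward (lo_corner Q) (hi_corner Q) w \<sigma>"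
    by (rule inward_mono[OF Q(6)]) (simp add: \<sigma>_def)
  have \<sigma>Q3: "inward (lo_corner Q3) (hi_corner Q3) w \<sigma>"
    by (rule inward_mono[OF Q3(3)]) (simp add: \<sigma>_def)
  have rayQ: "\<forall>\<^sub>F \<eta> in at_right 0. w + \<eta> *\<^sub>R \<sigma> \<in> ebox Q"
    and rayQ3: "\<forall>\<^sub>F \<eta> in at_right 0. w + \<eta> *\<^sub>R \<sigma> \<in> ebox Q3"
    using Q(5) \<sigma>Q Q3(2) \<sigma>Q3 unfolding ebox_def eventually_ray_in_cbox_iff by blast+
  then have "\<forall>\<^sub>F \<eta> in at_right 0. w + \<eta> *\<^sub>R \<sigma> \<in> cOmega N"
    using ebox_subset_cOmega[OF Q(1)] by (auto elim: eventually_mono)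
  then obtain T where T: "T \<in> M" and rayT: "\<forall>\<^sub>F \<eta> in at_right 0. w + \<eta> *\<^sub>R \<sigma> \<in> eset T"
    using eventually_ray_in_entity by blast
  obtain \<eta> where "w + \<eta> *\<^sub>R \<sigma> \<in> eset T" "w + \<eta> *\<^sub>R \<sigma> \<in> ebox Q" "w + \<eta> *\<^sub>R \<sigma> \<in> ebox Q3"
    using eventually_happens[OF eventually_conj[OF rayT eventually_conj[OF rayQ rayQ3]]] by auto
  moreover have "(w + \<eta> *\<^sub>R \<sigma>)$i = real_of_int n" "(w + \<eta> *\<^sub>R \<sigma>)$j = w$j"
    using w \<rho>(1) ij by (simp_all add: \<sigma>_def)
  ultimately obtain y where y: "y \<in> eset T" "y \<in> ebox Q" "y \<in> ebox Q3" "y$i = real_of_int n" "y$j = w$j"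
    by blast
  have TQ: "within_closure (T k) (Q k)" and TQ3: "within_closure (T k) (Q3 k)" for k
    using within_closure_of_point[OF T Q(1) y(1,2)] within_closure_of_point[OF T Q3M(1) y(1,3)] by auto
  have Ti: "T i = Pt n"
    using within_closure_endpoint[OF TQ3[of i]] y(1,4) Q3M(2) unfolding mem_eset by (metis insert_iff)
  define t where "t = (if 0 < \<rho>$j then clo (Q j) else chi (Q j))"
  have "w$j = real_of_int (clo (Q j)) \<or> w$j = real_of_int (chi (Q j))"
    by (rule crossing_on_facet[OF w Q(2,1,3-5) \<sigma>Q Q3(1,2) \<sigma>Q3]) (use \<rho>(2) in \<open>force simp: \<sigma>_def\<close>)
  then have wt: "w$j = real_of_int t"
    using Q(6) \<rho>(2)[OF ij] unfolding t_def inward_def lo_corner_def hi_corner_def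
    by (auto dest!: spec[of _ j])
  have t_Q: "t \<in> {clo (Q j), chi (Q j)}"
    unfolding t_def by simp
  have Tj: "T j = Pt t"
    using within_closure_endpoint[OF TQ[of j] _ t_Q] y(1,5) wt unfolding mem_eset by metis
  have T_iv: "is_iv (T k)" if "k \<noteq> i" "k \<noteq> j" for k
    using eventually_ray_in_eset_is_iv[OF rayT] \<rho>(2)[OF that(1)] that(2) by (simp add: \<sigma>_def)
  then have ridge: "ridge_at T i n j t"
    unfolding ridge_at_def using Ti Tj ij by auto
  have "0 < y$k \<and> y$k < real (N k)" for k
  proof -
    consider "k = i" | "k = j" | "k \<noteq> i" "k \<noteq> j"
      by blast
    then show ?thesis
    proof cases
      case 1
      then show ?thesis
        using y(4) Q(3,4) wf[OF Q(1), of i] unfolding wf_comp_def by simp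
    next
      case 2
      have "0 \<le> clo (Q3 j)" "chi (Q3 j) \<le> int (N j)" "0 \<le> clo (Q j)" "chi (Q j) \<le> int (N j)"
        "clo (Q j) < chi (Q j)"
        using wf[OF Q3M(1), of j] wf[OF Q(1), of j] Q(2) unfolding wf_comp_def is_cell_def by auto
      moreover have "0 < \<rho>$j \<Longrightarrow> real_of_int (clo (Q3 j)) < w$j"
        "\<rho>$j < 0 \<Longrightarrow> w$j < real_of_int (chi (Q3 j))"
        using Q3(3) ij unfolding inward_def lo_corner_def hi_corner_def by (auto dest!: spec[of _ j])
      ultimately show ?thesis
        using 2 y(5) wt \<rho>(2)[OF ij] unfolding t_def by (auto split: if_splits)
    next
      case 3
      then show ?thesis
        using eset_nth_in_Omega[OF T y(1) T_iv] by blast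
    qed
  qed
  then have "y \<in> Omega N"
    unfolding Omega_def by simp
  then have "tjunction N M T" "ascell_rel M T Q i j"
    using tjunctionI[OF d T ridge y(1) _ Q(1,2) TQ Q(3,4) t_Q] by blast+
  moreover have "w \<in> closure (eset T)"
    using eventually_ray_in_eset_imp[OF rayT] closure_eset_mesh[OF T] by simp
  ultimately show ?thesis
    using that wt unfolding t_def by blast
qed

text \<open>The combinatorial core: the sign pattern \<open>\<rho>0\<close> of the exit direction \<open>\<delta>\<close> points into no plane
  cell at \<open>w\<close>, the sign pattern \<open>\<tau>\<close> does.  Flipping the entries of \<open>\<rho>0\<close> one by one towards \<open>\<tau>\<close>,
  some single flip in a direction \<open>j\<close> turns a pattern \<open>\<rho>1\<close> pointing into a cell \<open>Q\<close> crossed by the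
  plane into one pointing into a plane cell; the T-junction lies between the two.\<close>

lemma tjunction_at_skeleton_exit:
  assumes d: "2 \<le> CARD('d)" and N: "\<And>k. 1 \<le> N k"
    and w: "w$i = real_of_int n" "w \<in> Sk M i"
    and \<delta>: "\<delta>$i = 0" "\<forall>\<^sub>F \<epsilon> in at_right 0. w + \<epsilon> *\<^sub>R \<delta> \<notin> Sk M i"
      "\<forall>\<^sub>F \<epsilon> in at_right 0. w + \<epsilon> *\<^sub>R \<delta> \<in> cOmega N"
  obtains T Q j where "tjunction N M T" "ascell_rel M T Q i j" "w \<in> closure (eset T)" "\<delta>$j \<noteq> 0"
    "\<forall>\<^sub>F \<epsilon> in at_right 0. w$j + \<epsilon> * \<delta>$j \<in> cset (Q j)"
proof -
  obtain Q2 where Q2: "cell_at_plane M i n Q2" "w \<in> ebox Q2"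
    using w Sk_on_plane by blast
  have Q2M: "Q2 \<in> M" "is_cell Q2"
    using Q2(1) unfolding cell_at_plane_def by auto
  define \<tau> :: "real^'d" where "\<tau> = (\<chi> k. if k = i then 0 else if w$k < hi_corner Q2 $ k then 1 else -1)"
  define \<rho>0 :: "real^'d" where "\<rho>0 = (\<chi> k. if k = i then 0 else if \<delta>$k \<noteq> 0 then sgn (\<delta>$k) else \<tau>$k)"
  have \<tau>_val: "\<tau>$k = (if k = i then 0 else if w$k < hi_corner Q2 $ k then 1 else -1)" for k
    by (simp add: \<tau>_def)
  have \<rho>0_val: "\<rho>0$k = (if k = i then 0 else if \<delta>$k \<noteq> 0 then sgn (\<delta>$k) else \<tau>$k)" for k
    by (simp add: \<rho>0_def)
  have lohi: "lo_corner Q2 $ k < hi_corner Q2 $ k" for k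
    using wf[OF Q2M(1), of k] Q2M(2) unfolding wf_comp_def is_cell_def lo_corner_def hi_corner_def by simp
  have wQ2: "lo_corner Q2 $ k \<le> w$k" "w$k \<le> hi_corner Q2 $ k" for k
    using Q2(2) unfolding ebox_def mem_box_cart by auto
  have \<tau>Q2: "inward (lo_corner Q2) (hi_corner Q2) w \<tau>"
    unfolding inward_def
  proof (intro allI conjI impI)
    fix k
    show "0 < \<tau>$k \<Longrightarrow> w$k < hi_corner Q2 $ k"
      unfolding \<tau>_val by (auto split: if_splits)
    show "\<tau>$k < 0 \<Longrightarrow> lo_corner Q2 $ k < w$k"
      using wQ2[of k] lohi[of k] unfolding \<tau>_val by (auto split: if_splits)
  qed
  then have "into_plane_cell M i n w \<tau>"
    using Q2 unfolding into_plane_cell_def by blast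
  moreover have "\<not> into_plane_cell M i n w \<rho>0"
  proof
    assume "into_plane_cell M i n w \<rho>0"
    then obtain Q where Q: "cell_at_plane M i n Q" "w \<in> ebox Q" "inward (lo_corner Q) (hi_corner Q) w \<rho>0"
      unfolding into_plane_cell_def by blast
    have "inward (lo_corner Q) (hi_corner Q) w \<delta>"
    proof (rule inward_mono[OF Q(3)])
      fix k
      show "(0 < \<delta>$k \<longrightarrow> 0 < \<rho>0$k) \<and> (\<delta>$k < 0 \<longrightarrow> \<rho>0$k < 0)"
        using \<delta>(1) by (cases "k = i") (auto simp: \<rho>0_val)
    qed
    then have "into_plane_cell M i n w \<delta>"
      unfolding into_plane_cell_def using Q(1,2) by blast
    then have "\<forall>\<^sub>F \<epsilon> in at_right 0. w + \<epsilon> *\<^sub>R \<delta> \<in> Sk M i"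
      using into_plane_cell_imp_Sk w(1) \<delta>(1) by blast
    then show False
      using eventually_happens[OF eventually_conj[OF \<delta>(2)]] by auto
  qed
  ultimately obtain \<rho>1 j where \<rho>1: "\<not> into_plane_cell M i n w \<rho>1"
    "into_plane_cell M i n w (\<chi> l. if l = j then \<tau>$j else \<rho>1$l)" "\<rho>1$j \<noteq> \<tau>$j" "\<rho>1$j = \<rho>0$j"
    "\<And>l. \<rho>1$l = \<rho>0$l \<or> \<rho>1$l = \<tau>$l"
    using single_flip_between[of "into_plane_cell M i n w" \<rho>0 \<tau>] by blast
  have \<rho>1_i: "\<rho>1$i = 0"
    using \<rho>1(5)[of i] \<rho>0_val[of i] \<tau>_val[of i] by auto
  have \<rho>1_k: "\<rho>1$k = 1 \<or> \<rho>1$k = -1" if "k \<noteq> i" for k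
  proof -
    have "\<tau>$k = 1 \<or> \<tau>$k = -1"
      using \<tau>_val[of k] that by simp
    moreover from this have "\<rho>0$k = 1 \<or> \<rho>0$k = -1"
      using \<rho>0_val[of k] that by (simp add: sgn_if)
    ultimately show ?thesis
      using \<rho>1(5)[of k] by auto
  qed
  have ji: "j \<noteq> i"
    using \<rho>1(3) \<rho>1_i \<tau>_val[of i] by auto
  have \<delta>_j: "\<delta>$j \<noteq> 0" and \<rho>1_j: "\<rho>1$j = sgn (\<delta>$j)"
    using \<rho>1(3,4) ji \<rho>0_val[of j] by (auto split: if_splits)
  have \<tau>_j: "\<tau>$j = - \<rho>1$j"
    using \<rho>1(3) \<rho>1_k[OF ji] ji \<tau>_val[of j] by auto
  have \<rho>1_nz: "\<rho>1$k \<noteq> 0" if "k \<noteq> i" for k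
    using \<rho>1_k[OF that] by auto
  have "\<forall>\<^sub>F \<epsilon> in at_right 0. w + \<epsilon> *\<^sub>R \<tau> \<in> ebox Q2"
    using \<tau>Q2 Q2(2) unfolding ebox_def eventually_ray_in_cbox_iff by blast
  then have "\<forall>\<^sub>F \<epsilon> in at_right 0. w + \<epsilon> *\<^sub>R \<tau> \<in> cOmega N"
    using ebox_subset_cOmega[OF Q2M(1)] by (auto elim: eventually_mono)
  then have \<tau>\<Omega>: "inward 0 (\<chi> k. real (N k)) w \<tau>" and w_\<Omega>: "w \<in> cOmega N"
    unfolding cOmega_eq_cbox eventually_ray_in_cbox_iff by simp_all
  have \<delta>\<Omega>: "inward 0 (\<chi> k. real (N k)) w \<delta>"
    using \<delta>(3) unfolding cOmega_eq_cbox eventually_ray_in_cbox_iff by simp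
  have signs: "(0 < \<rho>1$k \<longrightarrow> 0 < \<delta>$k \<or> 0 < \<tau>$k) \<and> (\<rho>1$k < 0 \<longrightarrow> \<delta>$k < 0 \<or> \<tau>$k < 0)" for k
    using \<rho>1(5)[of k] \<rho>0_val[of k] by (auto simp: sgn_if split: if_splits)
  have "inward 0 (\<chi> k. real (N k)) w \<rho>1"
    by (rule inward_combine[OF \<delta>\<Omega> \<tau>\<Omega> signs])
  then have "\<forall>\<^sub>F \<epsilon> in at_right 0. w + \<epsilon> *\<^sub>R \<rho>1 \<in> cOmega N"
    using w_\<Omega> unfolding cOmega_eq_cbox eventually_ray_in_cbox_iff by simp
  then obtain Q where Q: "Q \<in> M" "is_cell Q" "clo (Q i) < n" "n < chi (Q i)"
    and rayQ: "\<forall>\<^sub>F \<epsilon> in at_right 0. w + \<epsilon> *\<^sub>R \<rho>1 \<in> eset Q"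
    using crossing_cell[OF N w(1) \<rho>1_i \<rho>1_nz _ \<rho>1(1)] by blast
  have wQ: "w \<in> ebox Q" "inward (lo_corner Q) (hi_corner Q) w \<rho>1"
    using eventually_ray_in_eset_imp[OF rayQ] by auto
  obtain Q3 where Q3: "cell_at_plane M i n Q3" "w \<in> ebox Q3"
    "inward (lo_corner Q3) (hi_corner Q3) w (\<chi> l. if l = j then - \<rho>1$j else \<rho>1$l)"
    using \<rho>1(2) unfolding \<tau>_j into_plane_cell_def by blast
  obtain T where T: "tjunction N M T" "ascell_rel M T Q i j" "w \<in> closure (eset T)"
    and wj: "w$j = real_of_int (if 0 < \<rho>1$j then clo (Q j) else chi (Q j))"
    using tjunction_at_crossing[OF d w(1) ji \<rho>1_i \<rho>1_nz Q wQ Q3] by blast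
  have "clo (Q j) < chi (Q j)"
    using wf[OF Q(1), of j] Q(2) unfolding wf_comp_def is_cell_def by simp
  moreover have "w$j = real_of_int (clo (Q j)) \<and> 0 < \<delta>$j \<or> w$j = real_of_int (chi (Q j)) \<and> \<delta>$j < 0"
    using wj \<rho>1_j \<delta>_j by (auto simp: sgn_if)
  ultimately have "\<forall>\<^sub>F \<epsilon> in at_right 0. w$j + \<epsilon> * \<delta>$j \<in> cset (Q j)"
    using eventually_leave_endpoint[of "w$j" "real_of_int (clo (Q j))" "\<delta>$j" "real_of_int (chi (Q j))"]
      Q(2) unfolding is_cell_def by (simp add: mem_cset_iff)
  then show ?thesis
    using that T \<delta>_j by blast
qed

lemma closed_Sk: "closed (Sk M i)"
proof -
  have "Sk M i = (\<Union>Q\<in>{Q \<in> M. is_cell Q}.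
      closure (eset Q) \<inter> (\<lambda>z. z$i) -` {real_of_int (clo (Q i)), real_of_int (chi (Q i))})"
    unfolding Sk_def by auto
  moreover have "closed (closure (eset Q) \<inter> (\<lambda>z. z$i) -` {real_of_int (clo (Q i)), real_of_int (chi (Q i))})"
    for Q :: "'d ent"
    by (intro closed_Int closed_closure closed_vimage_vec_nth finite_imp_closed) simp
  ultimately show ?thesis
    using finite_mesh by (simp add: closed_UN)
qed

text \<open>Walking from \<open>u\<close> towards \<open>v\<close>, the first point \<open>w\<close> of the skeleton is left in direction
  \<open>u - v\<close> without touching the skeleton again.\<close>

lemma tjunction_on_segment:
  assumes d: "2 \<le> CARD('d)" and N: "\<And>k. 1 \<le> N k"
    and uv: "u \<in> cOmega N" "v \<in> cOmega N" "u$i = real_of_int n" "v$i = real_of_int n"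
    and Sk: "u \<notin> Sk M i" "v \<in> Sk M i"
  obtains T Q j where "tjunction N M T" "ascell_rel M T Q i j"
    "closure (eset T) \<inter> closed_segment u v \<noteq> {}" "u$j \<noteq> v$j"
    "cset (Q j) \<inter> (\<lambda>z. z$j) ` closed_segment u v \<noteq> {}"
proof -
  define f where "f t = u + t *\<^sub>R (v - u)" for t :: real
  define S where "S = {t \<in> {0..1}. f t \<in> Sk M i}"
  have "S = {0..1} \<inter> f -` Sk M i"
    unfolding S_def by auto
  moreover have "continuous (at t) f" for t
    unfolding f_def by (intro continuous_intros)
  ultimately have "closed S"
    using continuous_closed_vimage[OF closed_Sk, of f] by (simp add: closed_Int)
  moreover have "1 \<in> S"
    unfolding S_def f_def using Sk(2) by simp
  moreover have "bdd_below S"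
    unfolding S_def by (rule bdd_belowI[of _ 0]) auto
  ultimately have "Inf S \<in> S"
    using closed_contains_Inf by blast
  define ts where "ts = Inf S"
  have ts: "0 < ts" "ts \<le> 1" "f ts \<in> Sk M i"
    using \<open>Inf S \<in> S\<close> Sk(1) unfolding ts_def S_def f_def by (auto simp: order.order_iff_strict)
  have before: "f t \<notin> Sk M i" if "0 \<le> t" "t < ts" for t
    using that cInf_lower[OF _ \<open>bdd_below S\<close>, of t] ts(2) unfolding ts_def S_def by force
  have seg: "f t \<in> closed_segment u v" if "0 \<le> t" "t \<le> 1" for t
    unfolding closed_segment_def f_def using that by (intro CollectI exI[of _ t]) (simp add: algebra_simps)
  have segO: "closed_segment u v \<subseteq> cOmega N"
    using uv(1,2) unfolding cOmega_eq_cbox by (simp add: closed_segment_subset)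
  define w where "w = f ts"
  define \<delta> where "\<delta> = u - v"
  have shift: "w + \<epsilon> *\<^sub>R \<delta> = f (ts - \<epsilon>)" for \<epsilon>
    unfolding w_def \<delta>_def f_def by (simp add: algebra_simps)
  have small: "\<forall>\<^sub>F \<epsilon> in at_right 0. 0 < \<epsilon> \<and> \<epsilon> < ts"
    using eventually_at_right_less eventually_at_right_0_less[OF ts(1), of 1] by eventually_elim simp
  then have on_seg: "\<forall>\<^sub>F \<epsilon> in at_right 0. w + \<epsilon> *\<^sub>R \<delta> \<in> closed_segment u v"
    by eventually_elim (use seg shift ts(2) in simp)
  have "\<forall>\<^sub>F \<epsilon> in at_right 0. w + \<epsilon> *\<^sub>R \<delta> \<notin> Sk M i"
    using small by eventually_elim (use before shift in simp)
  moreover have "\<forall>\<^sub>F \<epsilon> in at_right 0. w + \<epsilon> *\<^sub>R \<delta> \<in> cOmega N"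
    using on_seg by eventually_elim (use segO in blast)
  moreover have "w$i = real_of_int n" "\<delta>$i = 0"
    unfolding w_def \<delta>_def f_def using uv(3,4) by (simp_all add: algebra_simps)
  ultimately obtain T Q j where T: "tjunction N M T" "ascell_rel M T Q i j" "w \<in> closure (eset T)"
    and j: "\<delta>$j \<noteq> 0" "\<forall>\<^sub>F \<epsilon> in at_right 0. w$j + \<epsilon> * \<delta>$j \<in> cset (Q j)"
    using tjunction_at_skeleton_exit[OF d N _ ts(3)[folded w_def]] by metis
  obtain \<epsilon> where "w + \<epsilon> *\<^sub>R \<delta> \<in> closed_segment u v" "w$j + \<epsilon> * \<delta>$j \<in> cset (Q j)"
    using eventually_happens[OF eventually_conj[OF on_seg j(2)]] by auto
  then have "w$j + \<epsilon> * \<delta>$j \<in> cset (Q j) \<inter> (\<lambda>z. z$j) ` closed_segment u v"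
    by (auto intro!: image_eqI[where x = "w + \<epsilon> *\<^sub>R \<delta>"])
  then have "cset (Q j) \<inter> (\<lambda>z. z$j) ` closed_segment u v \<noteq> {}"
    by blast
  moreover have "w \<in> closed_segment u v"
    unfolding w_def using seg ts by simp
  ultimately show ?thesis
    using that T j(1) unfolding \<delta>_def by fastforce
qed

lemma anchor_slice_wf:
  assumes "A \<in> anchors N p M" "0 \<le> n" "n \<le> int (N i)"
  shows "wf_comp (N k) ((A(i := Pt n)) k)"
proof (cases "k = i")
  case False
  obtain Q where Q: "Q \<in> M" "\<forall>l. if odd (p l) then \<exists>m\<in>{clo (Q l), chi (Q l)}. A l = Pt m else A l = Q l"
    using assms(1) unfolding anchors_def by blast
  have "clo (Q k) \<le> chi (Q k)"
    using wf[OF Q(1), of k] unfolding wf_comp_def by (cases "Q k") auto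
  then show ?thesis
    using Q(2)[rule_format, of k] wf[OF Q(1), of k] False unfolding wf_comp_def by (auto split: if_splits)
qed (use assms(2,3) in \<open>simp add: wf_comp_def\<close>)

lemma tjunction_for_anchor_slice:
  assumes d: "2 \<le> CARD('d)" and N: "\<And>k. 1 \<le> N k"
    and slice: "q \<in> eset (A(i := Pt n))" "eset (A(i := Pt n)) \<subseteq> cOmega N"
    and x: "x \<in> cOmega N" "x$i = real_of_int n" "q \<in> Sk M i \<longleftrightarrow> x \<notin> Sk M i"
  shows "\<exists>T Q j. tjunction N M T \<and> ascell_rel M T Q i j
      \<and> closure (eset T) \<inter> convex hull (eset (A(i := Pt n)) \<union> {x}) \<noteq> {}
      \<and> cset (Q j) \<inter> convex hull (cset (A j) \<union> {x$j}) \<noteq> {}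
      \<and> (\<exists>y\<in>cset (A j). y \<noteq> x$j)"
proof -
  have q: "q \<in> cOmega N" "q$i = real_of_int n"
    using slice eset_upd_Pt_nth by auto
  obtain T Q j where T: "tjunction N M T" "ascell_rel M T Q i j"
    and seg: "closure (eset T) \<inter> closed_segment q x \<noteq> {}" "q$j \<noteq> x$j"
      "cset (Q j) \<inter> (\<lambda>z. z$j) ` closed_segment q x \<noteq> {}"
  proof (cases "q \<in> Sk M i")
    case True
    then show ?thesis
      using tjunction_on_segment[OF d N x(1) q(1) x(2) q(2)] x(3) that
      by (metis closed_segment_commute)
  next
    case False
    then show ?thesis
      using tjunction_on_segment[OF d N q(1) x(1) q(2) x(2)] x(3) that by blast
  qed
  have ji: "j \<noteq> i"
    using T(2) unfolding ascell_rel_def by auto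
  have qj: "q$j \<in> cset (A j)"
    using slice(1) ji unfolding mem_eset by (metis fun_upd_other)
  have hull1: "closed_segment q x \<subseteq> convex hull (eset (A(i := Pt n)) \<union> {x})"
    unfolding segment_convex_hull using slice(1) by (intro hull_mono) auto
  have "(\<lambda>z. z$j) ` closed_segment q x = closed_segment (q$j) (x$j)"
    using closed_segment_linear_image[OF bounded_linear.linear[OF bounded_linear_vec_nth]] by metis
  moreover have "convex hull {q$j, x$j} \<subseteq> convex hull (cset (A j) \<union> {x$j})"
    using qj by (intro hull_mono) auto
  ultimately have hull2: "(\<lambda>z. z$j) ` closed_segment q x \<subseteq> convex hull (cset (A j) \<union> {x$j})"
    by (simp add: segment_convex_hull)
  show ?thesis
    using T seg qj hull1 hull2 by blast
qed

end

theorem proposition4p2: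
  fixes N p :: "'d::finite \<Rightarrow> nat" and M :: "'d ent set"
    and i :: 'd and n :: int and x :: "real^'d"
  assumes "CARD('d) \<ge> 2"
    and "\<forall>k. N k \<ge> 1"
    and "\<forall>k. p k \<ge> 1"
    and "mesh_gen N p M"
    and "0 \<le> n" and "n \<le> int (N i)"
    and "x \<in> ATJ N p M i n"
  shows "\<exists>A\<in>anchors N p M. x \<in> suppB p M A \<and>
           (\<exists>T Q j. tjunction N M T \<and> ascell_rel M T Q i j
              \<and> closure (eset T) \<inter> convex hull (eset (A(i := Pt n)) \<union> {x}) \<noteq> {}
              \<and> cset (Q j) \<inter> convex hull (cset (A j) \<union> {x$j}) \<noteq> {}
              \<and> (\<exists>y\<in>cset (A j). y \<noteq> x$j))"
proof -
  interpret box_complex N M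
    using mesh_gen_box_complex[OF assms(4)] by blast
  have x: "x \<in> cOmega N" "x$i = real_of_int n"
    using assms(7) unfolding ATJ_def Sj_def by auto
  have slice: "center (A(i := Pt n)) \<in> eset (A(i := Pt n))" "eset (A(i := Pt n)) \<subseteq> cOmega N"
    if "A \<in> anchors N p M" for A
    using anchor_slice_wf[OF that assms(5,6)] center_in_eset wf_eset_subset_cOmega by blast+
  note exit = tjunction_for_anchor_slice[OF assms(1) assms(2)[rule_format] _ _ x]
  show ?thesis
  proof (cases "x \<in> Sk M i")
    case True
    obtain A where A: "A \<in> anchors N p M" "n \<notin> gknots M i A" "x \<in> suppB p M A"
      using assms(7) unfolding ATJ_def by blast
    then obtain q where "q \<in> eset (A(i := Pt n))" "q \<notin> Sk M i"
      unfolding gknots_def by blast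
    then show ?thesis
      using A exit[of q A] slice[OF A(1)] True by blast
  next
    case False
    obtain A where A: "A \<in> anchors N p M" "n \<in> gknots M i A" "x \<in> suppB p M A"
      using assms(7) unfolding ATJ_def by blast
    then have "center (A(i := Pt n)) \<in> Sk M i"
      using slice(1)[OF A(1)] unfolding gknots_def by blast
    then show ?thesis
      using A exit[of "center (A(i := Pt n))" A] slice[OF A(1)] False by blast
  qed
qed

end
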